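(* Under the standing setup (C1)–(C4), there is a constant $\hat C>0$ such that whenever $N\ge n>m\ge[N^{1-\gamma}]\ge n_0$, $$\Big|E\Big(\sum_{k=m+1}^nR(k)\Big)^2-(n-m)\sigma^2\Big|\le\hat C,$$ where $R(k)=\prod_{j=1}^\ell X_j(q_j(k))-\prod_{j=1}^\ell a_j$ and $\sigma^2=EX_1^2(0)\big(\prod_{j=2}^\ell EX_j^2(0)-\prod_{j=2}^\ell a_j^2\big)+\sigma_1^2\prod_{j=2}^\ell a_j^2$ with $\sigma_1^2=EX_1^2(0)-a_1^2+2\sum_{n=1}^\infty E\big((X_1(rn)-a_1)(X_1(0)-a_1)\big)$.
   Context: Standing setup. $(\Omega,\mathcal F,P)$ is a probability space, $\ell\ge1$, $X_1,\dots,X_\ell$ are real stationary processes $X_j(n)$, $n\ge0$, with $|X_j(n)|\le D$ a.s. $\{\mathcal F_{kl}\}$ is a family of sub-$\sigma$-algebras, $\mathcal F_{kl}\subset\mathcal F_{k'l'}$ for $k'\le k$, $l'\ge l$. $\alpha(n)=\sup_{k\ge0}\sup_{A\in\mathcal F_{-\infty,k},B\in\mathcal F_{k+n,\infty}}|P(A\cap B)-P(A)P(B)|$, $\beta_j(n)=\sup_{m\ge0}E|X_j(m)-E(X_j(m)\mid\mathcal F_{m-n,m+n})|$. (C1): $\alpha(n)+\max_j\beta_j(n)\le\kappa^{-1}e^{-\kappa n}$ for some $\kappa>0$ and all $n$. (C2): $q_1(n)=rn+p$ with integers $r>0,p\ge0$. There exist $\gamma\in(0,1)$, $n_0>1$ such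 that for $n\ge n_0$: (C3) $q_j(n+1)\ge q_j(n)+n^\gamma$ for $j=2,\dots,\ell$; (C4) $q_{j+1}([n^{1-\gamma}])\ge q_j(n)n^\gamma$ for $j=1,\dots,\ell-1$. All $q_j$ take nonnegative integer values on nonnegative integers. $a_j=EX_j(0)$; empty products equal 1. *)

theory Defs
  imports "HOL-Probability.Probability"
begin

definition stationary_proc :: "'a measure \<Rightarrow> (nat \<Rightarrow> 'a \<Rightarrow> real) \<Rightarrow> bool" where
  "stationary_proc M Y \<longleftrightarrow>
     (\<forall>s::nat. \<forall>I::nat set. finite I \<longrightarrow>
        distr M (PiM I (\<lambda>_. borel)) (\<lambda>\<omega>. \<lambda>i\<in>I. Y (i + s) \<omega>)
      = distr M (PiM I (\<lambda>_. borel)) (\<lambda>\<omega>. \<lambda>i\<in>I. Y i \<omega>))"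

definition alpha_mix :: "'a measure \<Rightarrow> (ereal \<Rightarrow> ereal \<Rightarrow> 'a measure) \<Rightarrow> nat \<Rightarrow> real" where
  "alpha_mix M F n = Sup {\<bar>measure M (A \<inter> B) - measure M A * measure M B\<bar> | k A B.
       A \<in> sets (F (-\<infinity>) (ereal (real k))) \<and> B \<in> sets (F (ereal (real (k + n))) \<infinity>)}"

definition beta_approx :: "'a measure \<Rightarrow> (ereal \<Rightarrow> ereal \<Rightarrow> 'a measure) \<Rightarrow> (nat \<Rightarrow> 'a \<Rightarrow> real) \<Rightarrow> nat \<Rightarrow> real" where
  "beta_approx M F Y n = Sup {(\<integral>\<omega>. \<bar>Y m \<omega> - real_cond_exp M (F (ereal (real_of_int (int m - int n))) (ereal (real (m + n)))) (Y m) \<omega>\<bar> \<partial>M) | m. True}"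

definition mean0 :: "'a measure \<Rightarrow> (nat \<Rightarrow> nat \<Rightarrow> 'a \<Rightarrow> real) \<Rightarrow> nat \<Rightarrow> real" where
  "mean0 M X j = (\<integral>\<omega>. X j 0 \<omega> \<partial>M)"

definition Rproc :: "'a measure \<Rightarrow> nat \<Rightarrow> (nat \<Rightarrow> nat \<Rightarrow> 'a \<Rightarrow> real) \<Rightarrow> (nat \<Rightarrow> nat \<Rightarrow> nat) \<Rightarrow> nat \<Rightarrow> 'a \<Rightarrow> real" where
  "Rproc M L X q k \<omega> = (\<Prod>j=1..L. X j (q j k) \<omega>) - (\<Prod>j=1..L. mean0 M X j)"

definition sigma1sq :: "'a measure \<Rightarrow> (nat \<Rightarrow> nat \<Rightarrow> 'a \<Rightarrow> real) \<Rightarrow> nat \<Rightarrow> real" where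
  "sigma1sq M X r = (\<integral>\<omega>. (X 1 0 \<omega>)\<^sup>2 \<partial>M) - (mean0 M X 1)\<^sup>2
     + 2 * (\<Sum>n. \<integral>\<omega>. (X 1 (r * Suc n) \<omega> - mean0 M X 1) * (X 1 0 \<omega> - mean0 M X 1) \<partial>M)"

definition sigmasq :: "'a measure \<Rightarrow> nat \<Rightarrow> (nat \<Rightarrow> nat \<Rightarrow> 'a \<Rightarrow> real) \<Rightarrow> nat \<Rightarrow> real" where
  "sigmasq M L X r = (\<integral>\<omega>. (X 1 0 \<omega>)\<^sup>2 \<partial>M)
       * ((\<Prod>j=2..L. \<integral>\<omega>. (X j 0 \<omega>)\<^sup>2 \<partial>M) - (\<Prod>j=2..L. (mean0 M X j)\<^sup>2))
     + sigma1sq M X r * (\<Prod>j=2..L. (mean0 M X j)\<^sup>2)"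

end

theory Submission
  imports Defs "HOL-Real_Asymp.Real_Asymp"
begin

(*
  Expanding the square, E(sum_k R(k))^2 is a double sum of the pair covariances E[R(k) R(k')].
  Each pair is compared with a "limit covariance": the factors X_j(q_j(k)) with j >= 2 decouple
  from everything else, so E[R(k) R(k')] is close to
    prod_{j>=2} a_j^2 * c(|k - k'|)  (+ a diagonal correction when k = k'),
  where c(d) is the autocovariance of X_1 at lag r d.
*)

section \<open>Elementary estimates on reals and sums\<close>

lemma abs_mult_le: "\<bar>a\<bar> \<le> x \<Longrightarrow> \<bar>b\<bar> \<le> y \<Longrightarrow> \<bar>a * b\<bar> \<le> x * (y::real)"
  by (simp add: abs_mult mult_mono')

lemma abs_mult_diff_le: "\<bar>a * b - c * d\<bar> \<le> \<bar>a\<bar> * \<bar>b - d\<bar> + \<bar>d\<bar> * \<bar>a - (c::real)\<bar>"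
proof -
  have "a * b - c * d = a * (b - d) + d * (a - c)" by (simp add: algebra_simps)
  then show ?thesis by (metis abs_mult abs_triangle_ineq)
qed

text \<open>If \<open>I\<close> is close to \<open>A * C\<close> and the factors are close to \<open>P\<close> and \<open>w\<close>, then \<open>I\<close> is
  close to \<open>P * w\<close>: the induction step for integrals of products of decoupling factors.\<close>
lemma product_perturbation_le:
  fixes I A C P w :: real
  assumes "\<bar>I - A * C\<bar> \<le> \<delta>" "\<bar>A\<bar> \<le> a" "\<bar>C - w\<bar> \<le> \<epsilon>" "\<bar>w\<bar> \<le> c" "\<bar>A - P\<bar> \<le> \<rho>"
  shows "\<bar>I - P * w\<bar> \<le> \<delta> + a * \<epsilon> + c * \<rho>"
proof -
  have "\<bar>A * C - P * w\<bar> \<le> \<bar>A\<bar> * \<bar>C - w\<bar> + \<bar>w\<bar> * \<bar>A - P\<bar>" by (rule abs_mult_diff_le)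
  also have "\<dots> \<le> a * \<epsilon> + c * \<rho>" using assms by (intro add_mono mult_mono) auto
  finally show ?thesis using assms(1) by linarith
qed

lemma prod_split_first: "1 \<le> (L::nat) \<Longrightarrow> (\<Prod>j=1..L. f j) = f 1 * (\<Prod>j=2..L. f j)"
  using prod.atLeast_Suc_atMost[of 1 L f] by (cases "L = 1") (simp_all add: numeral_2_eq_2)

lemma geometric_tail_bound:
  fixes f :: "nat \<Rightarrow> real"
  assumes fb: "\<And>d. \<bar>f d\<bar> \<le> K * \<rho> ^ d" and r0: "0 \<le> \<rho>" and r1: "\<rho> < 1"
  shows "summable (\<lambda>n. f (Suc n))"
    "\<bar>(\<Sum>n. f (Suc n)) - (\<Sum>d=1..M. f d)\<bar> \<le> K * \<rho> ^ Suc M / (1 - \<rho>)"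
proof -
  have gs: "summable (\<lambda>n. K * \<rho> ^ Suc n)"
    using r0 r1 by (intro summable_mult) (simp add: summable_geometric)
  show sm: "summable (\<lambda>n. f (Suc n))"
    by (rule summable_comparison_test[OF _ gs]) (metis fb real_norm_def)
  have gs2: "summable (\<lambda>n. K * \<rho> ^ Suc M * \<rho> ^ n)"
    using r0 r1 by (intro summable_mult) (simp add: summable_geometric)
  have tail: "(\<Sum>n. f (Suc n)) - (\<Sum>d=1..M. f d) = (\<Sum>n. f (Suc (n + M)))"
    using suminf_split_initial_segment[OF sm, of M] by (simp add: sum.atLeast1_atMost_eq)
  have b: "\<bar>f (Suc (n + M))\<bar> \<le> K * \<rho> ^ Suc M * \<rho> ^ n" for n
    using fb[of "Suc (n + M)"] by (simp add: power_add mult_ac)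
  have "\<bar>\<Sum>n. f (Suc (n + M))\<bar> \<le> (\<Sum>n. K * \<rho> ^ Suc M * \<rho> ^ n)"
    using norm_suminf_le[of "\<lambda>n. f (Suc (n + M))" "\<lambda>n. K * \<rho> ^ Suc M * \<rho> ^ n"] b gs2 by simp
  also have "\<dots> = K * \<rho> ^ Suc M / (1 - \<rho>)"
    using r0 r1 by (simp add: suminf_mult suminf_geometric summable_geometric)
  finally show "\<bar>(\<Sum>n. f (Suc n)) - (\<Sum>d=1..M. f d)\<bar> \<le> K * \<rho> ^ Suc M / (1 - \<rho>)"
    unfolding tail .
qed

text \<open>The Toeplitz double sum of a sequence over the block \<open>m < k, k' \<le> m + M\<close>;
  \<open>(k - k') + (k' - k)\<close> is the distance of \<open>k\<close> and \<open>k'\<close> in \<open>nat\<close>.\<close>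
definition toeplitz_sum :: "(nat \<Rightarrow> real) \<Rightarrow> nat \<Rightarrow> nat \<Rightarrow> real" where
  "toeplitz_sum f m M = (\<Sum>k=m+1..m+M. \<Sum>k'=m+1..m+M. f ((k - k') + (k' - k)))"

lemma sum_reflect_block:
  fixes f :: "nat \<Rightarrow> real"
  shows "(\<Sum>k=m+1..m+M. f (m + M + 1 - k)) = (\<Sum>d=1..M. f d)"
  by (rule sum.reindex_bij_witness[where i="\<lambda>d. m + M + 1 - d" and j="\<lambda>k. m + M + 1 - k"]) auto

text \<open>Adding one point to the block adds one new row and one new column.\<close>
lemma toeplitz_sum_Suc:
  "toeplitz_sum f m (Suc M) = toeplitz_sum f m M + 2 * (\<Sum>d=1..M. f d) + f 0"
proof -
  define S where "S = {m+1..m+M}"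
  define u where "u = m + M + 1"
  define h where "h k k' = f ((k - k') + (k' - k))" for k k'
  have ins: "{m+1..m+Suc M} = insert u S" and uS: "u \<notin> S" "finite S"
    unfolding S_def u_def by auto
  have row: "(\<Sum>k'\<in>S. h u k') = (\<Sum>d=1..M. f d)"
  proof -
    have "(\<Sum>k'\<in>S. h u k') = (\<Sum>k=m+1..m+M. f (m + M + 1 - k))"
      unfolding S_def h_def u_def by (intro sum.cong) auto
    then show ?thesis by (simp only: sum_reflect_block)
  qed
  have col: "(\<Sum>k\<in>S. h k u) = (\<Sum>d=1..M. f d)"
  proof -
    have "(\<Sum>k\<in>S. h k u) = (\<Sum>k=m+1..m+M. f (m + M + 1 - k))"
      unfolding S_def h_def u_def by (intro sum.cong) auto
    then show ?thesis by (simp only: sum_reflect_block)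
  qed
  have "(\<Sum>k\<in>insert u S. \<Sum>k'\<in>insert u S. h k k')
      = (\<Sum>k\<in>S. \<Sum>k'\<in>S. h k k') + (\<Sum>k\<in>S. h k u) + (\<Sum>k'\<in>S. h u k') + h u u"
    using uS by (simp add: sum.distrib algebra_simps)
  then show ?thesis
    using row col ins unfolding toeplitz_sum_def S_def h_def by simp
qed

lemma toeplitz_sum_approx:
  fixes f :: "nat \<Rightarrow> real"
  assumes fb: "\<And>d. \<bar>f d\<bar> \<le> K * \<rho> ^ d" and r0: "0 \<le> \<rho>" and r1: "\<rho> < 1"
  shows "\<bar>toeplitz_sum f m M - real M * (f 0 + 2 * (\<Sum>n. f (Suc n)))\<bar> \<le> 2 * K / (1 - \<rho>) ^ 2"
proof -
  define T where "T = (\<Sum>n. f (Suc n))"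
  define D where "D M = toeplitz_sum f m M - real M * (f 0 + 2 * T)" for M
  have K0: "K \<ge> 0" using fb[of 0] by simp
  have D_bound: "\<bar>D M\<bar> \<le> 2 * K / (1 - \<rho>) * (\<Sum>i<M. \<rho> ^ Suc i)" for M
  proof (induction M)
    case 0 then show ?case unfolding D_def toeplitz_sum_def by simp
  next
    case (Suc M)
    have "D (Suc M) = D M + 2 * ((\<Sum>d=1..M. f d) - T)"
      unfolding D_def toeplitz_sum_Suc by (simp add: algebra_simps)
    moreover have "\<bar>(\<Sum>d=1..M. f d) - T\<bar> \<le> K * \<rho> ^ Suc M / (1 - \<rho>)"
      using geometric_tail_bound(2)[OF fb r0 r1, of M] unfolding T_def by (simp add: abs_minus_commute)
    ultimately have "\<bar>D (Suc M)\<bar> \<le> \<bar>D M\<bar> + 2 * K / (1 - \<rho>) * \<rho> ^ Suc M"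
      by (simp add: abs_le_iff; linarith)
    then show ?case using Suc.IH by (simp add: algebra_simps)
  qed
  have "(\<Sum>i<M. \<rho> ^ Suc i) \<le> (\<Sum>i<M. \<rho> ^ i)"
    using r0 r1 by (intro sum_mono) (simp add: mult_left_le_one_le)
  also have "\<dots> = (1 - \<rho> ^ M) / (1 - \<rho>)" using r1 by (simp add: sum_gp_strict)
  also have "\<dots> \<le> 1 / (1 - \<rho>)" using r0 r1 by (intro divide_right_mono) auto
  finally have "(\<Sum>i<M. \<rho> ^ Suc i) \<le> 1 / (1 - \<rho>)" .
  then have "\<bar>D M\<bar> \<le> 2 * K / (1 - \<rho>) * (1 / (1 - \<rho>))"
    using D_bound[of M] K0 r1 by (meson order_trans mult_left_mono divide_nonneg_pos mult_nonneg_nonneg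
        zero_le_numeral diff_gt_0_iff_gt)
  then show ?thesis unfolding D_def T_def by (simp add: power2_eq_square)
qed

text \<open>\<open>x\<^sup>2 exp (- c x\<^sup>\<delta>)\<close> is bounded on \<open>[0, \<infinity>)\<close>: a quadratic number of pair errors of size
  \<open>exp (- c N\<^sup>\<delta>)\<close> sums to a bounded quantity.\<close>
lemma square_stretched_exp_bounded:
  fixes c \<delta> :: real
  assumes c: "c > 0" and d: "\<delta> > 0"
  obtains C where "\<And>x. x \<ge> 0 \<Longrightarrow> x ^ 2 * exp (- c * x powr \<delta>) \<le> C"
proof -
  have "((\<lambda>x. x ^ 2 * exp (- c * x powr \<delta>)) \<longlongrightarrow> 0) at_top"
    using c d by real_asymp
  then have "eventually (\<lambda>x. x ^ 2 * exp (- c * x powr \<delta>) < 1) at_top"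
    by (rule order_tendstoD) simp
  then obtain X0 where X0: "\<And>x. x \<ge> X0 \<Longrightarrow> x ^ 2 * exp (- c * x powr \<delta>) < 1"
    by (auto simp: eventually_at_top_linorder)
  have "x ^ 2 * exp (- c * x powr \<delta>) \<le> max 1 (X0 ^ 2)" if x: "x \<ge> 0" for x
  proof (cases "x \<ge> X0")
    case True then show ?thesis using X0[of x] by simp
  next
    case False
    have "x ^ 2 \<le> X0 ^ 2" using False x by (intro power_mono) auto
    moreover have "exp (- c * x powr \<delta>) \<le> 1" using c x by simp
    ultimately have "x ^ 2 * exp (- c * x powr \<delta>) \<le> X0 ^ 2 * 1" by (intro mult_mono) auto
    then show ?thesis by simp
  qed
  then show ?thesis using that by blast
qed

section \<open>General probabilistic facts\<close>

text \<open>Sub-\<open>\<sigma>\<close>-algebras of a probability space admit conditional expectations.\<close>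
lemma prob_space_subalgebra_sigma_finite:
  assumes "prob_space M" "subalgebra M G"
  shows "sigma_finite_subalgebra M G"
  apply (rule finite_measure_subalgebra_is_sigma_finite)
  using assms unfolding finite_measure_subalgebra_def finite_measure_subalgebra_axioms_def
  by (simp add: prob_space.finite_measure)

lemma integrable_AE_bounded:
  fixes f :: "_ \<Rightarrow> real"
  assumes "prob_space M" "f \<in> borel_measurable M" "AE x in M. \<bar>f x\<bar> \<le> c"
  shows "integrable M f"
  using assms finite_measure.integrable_const_bound[of M f c] prob_space.finite_measure
  by fastforce

lemma AE_abs_bound_nonneg:
  fixes f :: "_ \<Rightarrow> real"
  assumes "prob_space M" "AE x in M. \<bar>f x\<bar> \<le> c"
  shows "c \<ge> 0"
proof (rule ccontr)
  assume "\<not> c \<ge> 0"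
  then have "AE x in M. False" using assms(2) by (auto elim: AE_mp)
  then show False using assms(1) prob_space.AE_False by blast
qed

lemma abs_integral_le_AE_bound:
  fixes f :: "_ \<Rightarrow> real"
  assumes M: "prob_space M" and "f \<in> borel_measurable M" "AE x in M. \<bar>f x\<bar> \<le> c"
  shows "\<bar>\<integral>x. f x \<partial>M\<bar> \<le> c"
proof -
  interpret P: prob_space M by (rule M)
  have "\<bar>\<integral>x. f x \<partial>M\<bar> \<le> (\<integral>x. \<bar>f x\<bar> \<partial>M)" by (rule integral_abs_bound)
  also have "\<dots> \<le> (\<integral>x. c \<partial>M)"
    by (rule integral_mono_AE') (use assms AE_abs_bound_nonneg[OF M assms(3)] in auto)
  finally show ?thesis by (simp add: P.prob_space)
qed

lemma abs_integral_diff_le: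
  fixes f g :: "_ \<Rightarrow> real"
  assumes "integrable M f" "integrable M g"
  shows "\<bar>(\<integral>x. f x \<partial>M) - (\<integral>x. g x \<partial>M)\<bar> \<le> (\<integral>x. \<bar>f x - g x\<bar> \<partial>M)"
  using assms integral_abs_bound[of M "\<lambda>x. f x - g x"] by simp

lemma real_cond_exp_AE_abs_le:
  fixes f :: "_ \<Rightarrow> real"
  assumes M: "prob_space M" and G: "subalgebra M G"
    and "f \<in> borel_measurable M" "AE x in M. \<bar>f x\<bar> \<le> c"
  shows "AE x in M. \<bar>real_cond_exp M G f x\<bar> \<le> c"
proof -
  interpret sigma_finite_subalgebra M G using prob_space_subalgebra_sigma_finite M G by blast
  have f: "integrable M f" using integrable_AE_bounded assms by blast
  have "AE x in M. real_cond_exp M G f x \<le> c"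
    by (rule real_cond_exp_le_c) (use f assms(4) in auto)
  moreover have "AE x in M. real_cond_exp M G f x \<ge> -c"
    by (rule real_cond_exp_ge_c) (use f assms(4) in auto)
  ultimately show ?thesis by eventually_elim auto
qed

lemma integral_abs_product_diff_le:
  fixes U V W Z :: "_ \<Rightarrow> real"
  assumes M: "prob_space M"
    and meas: "U \<in> borel_measurable M" "V \<in> borel_measurable M"
      "W \<in> borel_measurable M" "Z \<in> borel_measurable M"
    and U: "AE x in M. \<bar>U x\<bar> \<le> b" and V: "AE x in M. \<bar>V x\<bar> \<le> b"
    and W: "AE x in M. \<bar>W x\<bar> \<le> c" and Z: "AE x in M. \<bar>Z x\<bar> \<le> c"
  shows "(\<integral>x. \<bar>U x * W x - V x * Z x\<bar> \<partial>M)
           \<le> b * (\<integral>x. \<bar>W x - Z x\<bar> \<partial>M) + c * (\<integral>x. \<bar>U x - V x\<bar> \<partial>M)"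
proof -
  have b0: "b \<ge> 0" and c0: "c \<ge> 0" using AE_abs_bound_nonneg[OF M] U W by blast+
  have iWZ: "integrable M (\<lambda>x. \<bar>W x - Z x\<bar>)"
    by (rule integrable_AE_bounded[OF M, where c="2*c"]) (use meas W Z in \<open>measurable, auto elim: AE_mp\<close>)
  have iUV: "integrable M (\<lambda>x. \<bar>U x - V x\<bar>)"
    by (rule integrable_AE_bounded[OF M, where c="2*b"]) (use meas U V in \<open>measurable, auto elim: AE_mp\<close>)
  have "(\<integral>x. \<bar>U x * W x - V x * Z x\<bar> \<partial>M) \<le> (\<integral>x. b * \<bar>W x - Z x\<bar> + c * \<bar>U x - V x\<bar> \<partial>M)"
  proof (rule integral_mono_AE')
    show "integrable M (\<lambda>x. b * \<bar>W x - Z x\<bar> + c * \<bar>U x - V x\<bar>)" using iWZ iUV by simp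
    show "AE x in M. \<bar>U x * W x - V x * Z x\<bar> \<le> b * \<bar>W x - Z x\<bar> + c * \<bar>U x - V x\<bar>"
      using U Z
    proof eventually_elim
      case (elim x)
      have "\<bar>U x * W x - V x * Z x\<bar> \<le> \<bar>U x\<bar> * \<bar>W x - Z x\<bar> + \<bar>Z x\<bar> * \<bar>U x - V x\<bar>"
        by (rule abs_mult_diff_le)
      also have "\<dots> \<le> b * \<bar>W x - Z x\<bar> + c * \<bar>U x - V x\<bar>"
        by (intro add_mono mult_right_mono) (use elim in auto)
      finally show ?case .
    qed
    show "AE x in M. 0 \<le> b * \<bar>W x - Z x\<bar> + c * \<bar>U x - V x\<bar>"
      using b0 c0 by (intro AE_I2) simp
  qed
  also have "\<dots> = b * (\<integral>x. \<bar>W x - Z x\<bar> \<partial>M) + c * (\<integral>x. \<bar>U x - V x\<bar> \<partial>M)"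
    using iWZ iUV by simp
  finally show ?thesis .
qed

lemma covariance_perturbation:
  fixes U V W Z :: "_ \<Rightarrow> real"
  assumes M: "prob_space M"
    and meas: "U \<in> borel_measurable M" "V \<in> borel_measurable M"
      "W \<in> borel_measurable M" "Z \<in> borel_measurable M"
    and U: "AE x in M. \<bar>U x\<bar> \<le> b" and V: "AE x in M. \<bar>V x\<bar> \<le> b"
    and W: "AE x in M. \<bar>W x\<bar> \<le> c" and Z: "AE x in M. \<bar>Z x\<bar> \<le> c"
  shows "\<bar>((\<integral>x. U x * W x \<partial>M) - (\<integral>x. U x \<partial>M) * (\<integral>x. W x \<partial>M))
          - ((\<integral>x. V x * Z x \<partial>M) - (\<integral>x. V x \<partial>M) * (\<integral>x. Z x \<partial>M))\<bar>
         \<le> 2 * (b * (\<integral>x. \<bar>W x - Z x\<bar> \<partial>M) + c * (\<integral>x. \<bar>U x - V x\<bar> \<partial>M))"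
proof -
  have b0: "b \<ge> 0" and c0: "c \<ge> 0" using AE_abs_bound_nonneg[OF M] U W by blast+
  have int: "integrable M f" if "f \<in> borel_measurable M" "AE x in M. \<bar>f x\<bar> \<le> d"
    for f :: "_ \<Rightarrow> real" and d
    using integrable_AE_bounded[OF M that] .
  have prod_int: "integrable M (\<lambda>x. f x * g x)"
    if "f \<in> borel_measurable M" "AE x in M. \<bar>f x\<bar> \<le> b"
      "g \<in> borel_measurable M" "AE x in M. \<bar>g x\<bar> \<le> c" for f g :: "_ \<Rightarrow> real"
    by (rule int[of _ "b * c"]) (use that in \<open>measurable, auto elim: AE_mp intro: abs_mult_le\<close>)
  have "\<bar>(\<integral>x. U x * W x \<partial>M) - (\<integral>x. V x * Z x \<partial>M)\<bar> \<le> (\<integral>x. \<bar>U x * W x - V x * Z x\<bar> \<partial>M)"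
    using abs_integral_diff_le prod_int meas U V W Z by blast
  also have "\<dots> \<le> b * (\<integral>x. \<bar>W x - Z x\<bar> \<partial>M) + c * (\<integral>x. \<bar>U x - V x\<bar> \<partial>M)"
    by (rule integral_abs_product_diff_le[OF M meas U V W Z])
  finally have products: "\<bar>(\<integral>x. U x * W x \<partial>M) - (\<integral>x. V x * Z x \<partial>M)\<bar>
      \<le> b * (\<integral>x. \<bar>W x - Z x\<bar> \<partial>M) + c * (\<integral>x. \<bar>U x - V x\<bar> \<partial>M)" .
  have "\<bar>(\<integral>x. V x \<partial>M) * (\<integral>x. Z x \<partial>M) - (\<integral>x. U x \<partial>M) * (\<integral>x. W x \<partial>M)\<bar>
      \<le> \<bar>\<integral>x. V x \<partial>M\<bar> * \<bar>(\<integral>x. Z x \<partial>M) - (\<integral>x. W x \<partial>M)\<bar>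
       + \<bar>\<integral>x. W x \<partial>M\<bar> * \<bar>(\<integral>x. V x \<partial>M) - (\<integral>x. U x \<partial>M)\<bar>"
    by (rule abs_mult_diff_le)
  also have "\<dots> \<le> b * (\<integral>x. \<bar>W x - Z x\<bar> \<partial>M) + c * (\<integral>x. \<bar>U x - V x\<bar> \<partial>M)"
  proof (intro add_mono mult_mono)
    show "\<bar>\<integral>x. V x \<partial>M\<bar> \<le> b" "\<bar>\<integral>x. W x \<partial>M\<bar> \<le> c"
      using abs_integral_le_AE_bound[OF M] meas V W by blast+
    show "\<bar>(\<integral>x. Z x \<partial>M) - (\<integral>x. W x \<partial>M)\<bar> \<le> (\<integral>x. \<bar>W x - Z x\<bar> \<partial>M)"
      using abs_integral_diff_le[OF int[OF meas(3) W] int[OF meas(4) Z]] by (simp add: abs_minus_commute)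
    show "\<bar>(\<integral>x. V x \<partial>M) - (\<integral>x. U x \<partial>M)\<bar> \<le> (\<integral>x. \<bar>U x - V x\<bar> \<partial>M)"
      using abs_integral_diff_le[OF int[OF meas(1) U] int[OF meas(2) V]] by (simp add: abs_minus_commute)
  qed (use b0 c0 in auto)
  finally show ?thesis using products by (simp add: abs_le_iff algebra_simps)
qed

lemma covariance_cond_exp:
  fixes V W :: "_ \<Rightarrow> real"
  assumes M: "prob_space M" and G: "subalgebra M G"
    and Vm: "V \<in> borel_measurable G" and Vb: "AE x in M. \<bar>V x\<bar> \<le> b"
    and Wm: "W \<in> borel_measurable M" and Wb: "AE x in M. \<bar>W x\<bar> \<le> c"
  shows "(\<integral>x. V x * W x \<partial>M) - (\<integral>x. V x \<partial>M) * (\<integral>x. W x \<partial>M)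
       = (\<integral>x. V x * (real_cond_exp M G W x - (\<integral>x. W x \<partial>M)) \<partial>M)"
proof -
  interpret S: sigma_finite_subalgebra M G using prob_space_subalgebra_sigma_finite M G by blast
  have VmM: "V \<in> borel_measurable M" using Vm G by (rule measurable_from_subalg[rotated])
  have b0: "b \<ge> 0" and c0: "c \<ge> 0" using AE_abs_bound_nonneg[OF M] Vb Wb by blast+
  have iV: "integrable M V" by (rule integrable_AE_bounded[OF M VmM Vb])
  have "AE x in M. \<bar>V x * W x\<bar> \<le> b * c"
    using Vb Wb by eventually_elim (simp add: abs_mult mult_mono b0 c0)
  then have iVW: "integrable M (\<lambda>x. V x * W x)"
    by (rule integrable_AE_bounded[OF M, rotated]) (use VmM Wm in measurable)
  have iVY: "integrable M (\<lambda>x. V x * real_cond_exp M G W x)"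
    and intVY: "(\<integral>x. V x * real_cond_exp M G W x \<partial>M) = (\<integral>x. V x * W x \<partial>M)"
    using S.real_cond_exp_intg[OF iVW Vm Wm] by auto
  have "(\<integral>x. V x * (real_cond_exp M G W x - (\<integral>x. W x \<partial>M)) \<partial>M)
      = (\<integral>x. V x * real_cond_exp M G W x - (\<integral>x. W x \<partial>M) * V x \<partial>M)"
    by (simp add: algebra_simps)
  also have "\<dots> = (\<integral>x. V x * W x \<partial>M) - (\<integral>x. W x \<partial>M) * (\<integral>x. V x \<partial>M)"
    using iVY iV intVY by simp
  finally show ?thesis by (simp add: mult.commute)
qed

lemma covariance_le_sign_covariance:
  fixes V W :: "_ \<Rightarrow> real"
  assumes M: "prob_space M" and G: "subalgebra M G"
    and Vm: "V \<in> borel_measurable G" and Vb: "AE x in M. \<bar>V x\<bar> \<le> b"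
    and Wm: "W \<in> borel_measurable M" and Wb: "AE x in M. \<bar>W x\<bar> \<le> c"
  shows "\<bar>(\<integral>x. V x * W x \<partial>M) - (\<integral>x. V x \<partial>M) * (\<integral>x. W x \<partial>M)\<bar>
     \<le> b * ((\<integral>x. sgn (real_cond_exp M G W x - (\<integral>x. W x \<partial>M)) * W x \<partial>M)
         - (\<integral>x. sgn (real_cond_exp M G W x - (\<integral>x. W x \<partial>M)) \<partial>M) * (\<integral>x. W x \<partial>M))"
proof -
  interpret P: prob_space M by (rule M)
  interpret S: sigma_finite_subalgebra M G using prob_space_subalgebra_sigma_finite M G by blast
  define Y where "Y x = real_cond_exp M G W x - (\<integral>x. W x \<partial>M)" for x
  define \<xi> where "\<xi> x = sgn (Y x)" for x
  have b0: "b \<ge> 0" using AE_abs_bound_nonneg[OF M Vb] .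
  have Ym: "Y \<in> borel_measurable G" unfolding Y_def by simp
  have \<xi>m: "\<xi> \<in> borel_measurable G" unfolding \<xi>_def using Ym by measurable
  have \<xi>b: "AE x in M. \<bar>\<xi> x\<bar> \<le> 1" unfolding \<xi>_def by (simp add: abs_sgn_eq)
  have iW: "integrable M W" by (rule integrable_AE_bounded[OF M Wm Wb])
  have iY: "integrable M Y" unfolding Y_def using S.real_cond_exp_int(1)[OF iW] by simp
  have "\<bar>(\<integral>x. V x * W x \<partial>M) - (\<integral>x. V x \<partial>M) * (\<integral>x. W x \<partial>M)\<bar> = \<bar>\<integral>x. V x * Y x \<partial>M\<bar>"
    unfolding Y_def by (simp add: covariance_cond_exp[OF M G Vm Vb Wm Wb])
  also have "\<dots> \<le> (\<integral>x. \<bar>V x * Y x\<bar> \<partial>M)" by (rule integral_abs_bound)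
  also have "\<dots> \<le> (\<integral>x. b * \<bar>Y x\<bar> \<partial>M)"
  proof (rule integral_mono_AE')
    show "integrable M (\<lambda>x. b * \<bar>Y x\<bar>)" using iY by simp
    show "AE x in M. \<bar>V x * Y x\<bar> \<le> b * \<bar>Y x\<bar>"
      using Vb by eventually_elim (simp add: abs_mult mult_right_mono)
    show "AE x in M. 0 \<le> b * \<bar>Y x\<bar>" using b0 by simp
  qed
  also have "\<dots> = b * (\<integral>x. \<xi> x * Y x \<partial>M)"
  proof -
    have "\<And>x. \<bar>Y x\<bar> = \<xi> x * Y x" unfolding \<xi>_def by (simp add: abs_sgn mult.commute)
    then show ?thesis by simp
  qed
  also have "(\<integral>x. \<xi> x * Y x \<partial>M) = (\<integral>x. \<xi> x * W x \<partial>M) - (\<integral>x. \<xi> x \<partial>M) * (\<integral>x. W x \<partial>M)"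
    unfolding Y_def by (simp add: covariance_cond_exp[OF M G \<xi>m \<xi>b Wm Wb])
  finally show ?thesis unfolding \<xi>_def Y_def .
qed

lemma sgn_indicator_diff:
  fixes f :: "_ \<Rightarrow> real"
  assumes "f \<in> borel_measurable G"
  obtains A1 A2 where "A1 \<in> sets G" "A2 \<in> sets G"
    "\<And>x. x \<in> space G \<Longrightarrow> sgn (f x) = indicator A1 x - indicator A2 x"
proof
  show "{x \<in> space G. 0 < f x} \<in> sets G" "{x \<in> space G. f x < 0} \<in> sets G"
    by (rule borel_measurable_less; simp add: assms)+
  show "sgn (f x) = indicator {x \<in> space G. 0 < f x} x - indicator {x \<in> space G. f x < 0} x"
    if "x \<in> space G" for x
    using that by (simp add: sgn_real_def indicator_def)
qed

lemma stationary_integral: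
  fixes Y :: "nat \<Rightarrow> _ \<Rightarrow> real" and g :: "(nat \<Rightarrow> real) \<Rightarrow> real"
  assumes st: "stationary_proc M Y" and Ym: "\<And>i. Y i \<in> borel_measurable M" and I: "finite I"
    and g: "g \<in> borel_measurable (PiM I (\<lambda>_. borel))"
  shows "(\<integral>\<omega>. g (\<lambda>i\<in>I. Y (i + s) \<omega>) \<partial>M) = (\<integral>\<omega>. g (\<lambda>i\<in>I. Y i \<omega>) \<partial>M)"
proof -
  have m1: "(\<lambda>\<omega>. \<lambda>i\<in>I. Y (i + s) \<omega>) \<in> measurable M (PiM I (\<lambda>_. borel))"
    by (rule measurable_restrict) (simp add: Ym)
  have m0: "(\<lambda>\<omega>. \<lambda>i\<in>I. Y i \<omega>) \<in> measurable M (PiM I (\<lambda>_. borel))"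
    by (rule measurable_restrict) (simp add: Ym)
  have "(\<integral>\<omega>. g (\<lambda>i\<in>I. Y (i + s) \<omega>) \<partial>M)
      = (\<integral>x. g x \<partial>distr M (PiM I (\<lambda>_. borel)) (\<lambda>\<omega>. \<lambda>i\<in>I. Y (i + s) \<omega>))"
    by (rule integral_distr[OF m1 g, symmetric])
  also have "\<dots> = (\<integral>x. g x \<partial>distr M (PiM I (\<lambda>_. borel)) (\<lambda>\<omega>. \<lambda>i\<in>I. Y i \<omega>))"
    using st I unfolding stationary_proc_def by metis
  also have "\<dots> = (\<integral>\<omega>. g (\<lambda>i\<in>I. Y i \<omega>) \<partial>M)"
    by (rule integral_distr[OF m0 g])
  finally show ?thesis .
qed

section \<open>Products of process values\<close>

inductive value_product ::
    "(nat \<Rightarrow> nat \<Rightarrow> 'a \<Rightarrow> real) \<Rightarrow> nat \<Rightarrow> (nat \<Rightarrow> bool) \<Rightarrow> ('a \<Rightarrow> real) \<Rightarrow> nat \<Rightarrow> bool"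
  for X L P where
  unit: "value_product X L P (\<lambda>\<omega>. 1) 0"
| factor: "value_product X L P U s \<Longrightarrow> j \<in> {1..L} \<Longrightarrow> P t \<Longrightarrow>
    value_product X L P (\<lambda>\<omega>. U \<omega> * X j t \<omega>) (Suc s)"

lemma value_product_mono:
  "value_product X L P U s \<Longrightarrow> (\<And>t. P t \<Longrightarrow> Q t) \<Longrightarrow> value_product X L Q U s"
  by (induction rule: value_product.induct) (auto intro: value_product.intros)

lemma value_product_single: "j \<in> {1..L} \<Longrightarrow> P t \<Longrightarrow> value_product X L P (X j t) 1"
  using value_product.factor[OF value_product.unit, of j L P t X] by simp

lemma value_product_power:
  assumes "j \<in> {1..L}" "P t"
  shows "value_product X L P (\<lambda>\<omega>. X j t \<omega> ^ s) s"
proof (induction s)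
  case 0 then show ?case using value_product.unit by simp
next
  case (Suc s)
  from value_product.factor[OF Suc assms] show ?case by (simp only: power_Suc2)
qed

lemma value_product_mult:
  "value_product X L P W s' \<Longrightarrow> value_product X L P U s \<Longrightarrow>
    value_product X L P (\<lambda>\<omega>. U \<omega> * W \<omega>) (s + s')"
proof (induction rule: value_product.induct)
  case unit then show ?case by simp
next
  case (factor W s' j t)
  have "value_product X L P (\<lambda>\<omega>. (U \<omega> * W \<omega>) * X j t \<omega>) (Suc (s + s'))"
    using factor by (intro value_product.factor) auto
  then show ?case by (simp add: mult.assoc)
qed

lemma value_product_prod:
  fixes n :: nat
  shows "(\<And>j. j \<in> {1..n} \<Longrightarrow> value_product X L P (W j) (s j)) \<Longrightarrow>
    value_product X L P (\<lambda>\<omega>. \<Prod>j=1..n. W j \<omega>) (\<Sum>j=1..n. s j)"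
proof (induction n)
  case 0 then show ?case using value_product.unit by simp
next
  case (Suc n)
  have "value_product X L P (\<lambda>\<omega>. \<Prod>j=1..n. W j \<omega>) (\<Sum>j=1..n. s j)" using Suc by auto
  from value_product_mult[OF _ this, of "W (Suc n)" "s (Suc n)"] Suc.prems show ?case by simp
qed

section \<open>The standing assumptions\<close>

locale nonconventional_setup =
  fixes M :: "'a measure"
    and L :: nat
    and X :: "nat \<Rightarrow> nat \<Rightarrow> 'a \<Rightarrow> real"
    and q :: "nat \<Rightarrow> nat \<Rightarrow> nat"
    and F :: "ereal \<Rightarrow> ereal \<Rightarrow> 'a measure"
    and D \<kappa> \<gamma> :: real
    and r p n\<^sub>0 :: nat
  assumes prob: "prob_space M"
    and l_pos: "L \<ge> 1"
    and X_meas: "\<And>j n. j \<in> {1..L} \<Longrightarrow> X j n \<in> borel_measurable M"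
    and X_stat: "\<And>j. j \<in> {1..L} \<Longrightarrow> stationary_proc M (X j)"
    and X_bdd: "\<And>j n. j \<in> {1..L} \<Longrightarrow> AE \<omega> in M. \<bar>X j n \<omega>\<bar> \<le> D"
    and F_sub: "\<And>k l. subalgebra M (F k l)"
    and F_mono: "\<And>k l k' l'. k' \<le> k \<Longrightarrow> l \<le> l' \<Longrightarrow> sets (F k l) \<subseteq> sets (F k' l')"
    and C1: "\<kappa> > 0" "\<And>n. alpha_mix M F n + Max ((\<lambda>j. beta_approx M F (X j) n) ` {1..L})
                              \<le> exp (- \<kappa> * real n) / \<kappa>"
    and C2: "r > 0" "\<And>n. q 1 n = r * n + p"
    and gamma: "0 < \<gamma>" "\<gamma> < 1" and n0: "n\<^sub>0 > 1"
    and C3: "\<And>j n. j \<in> {2..L} \<Longrightarrow> n \<ge> n\<^sub>0 \<Longrightarrow>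
               real (q j (n + 1)) \<ge> real (q j n) + real n powr \<gamma>"
    and C4: "\<And>j n. j \<in> {1..<L} \<Longrightarrow> n \<ge> n\<^sub>0 \<Longrightarrow>
               real (q (j + 1) (nat \<lfloor>real n powr (1 - \<gamma>)\<rfloor>)) \<ge> real (q j n) * real n powr \<gamma>"
begin

interpretation P: prob_space M by (rule prob)

text \<open>A bound \<open>B \<ge> 1\<close> for all \<open>|X j n|\<close>; \<open>B \<ge> 1\<close> makes \<open>B ^ s\<close> monotone in \<open>s\<close>.\<close>
definition B :: real where "B = \<bar>D\<bar> + 1"

lemma B_ge1: "B \<ge> 1" unfolding B_def by simp

lemma X_bound: "j \<in> {1..L} \<Longrightarrow> AE \<omega> in M. \<bar>X j n \<omega>\<bar> \<le> B"
  using X_bdd[of j n] unfolding B_def by (auto elim: AE_mp)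

lemma alpha_upper:
  assumes "A \<in> sets (F (-\<infinity>) (ereal (real k)))" "C \<in> sets (F (ereal (real (k + n))) \<infinity>)"
  shows "\<bar>measure M (A \<inter> C) - measure M A * measure M C\<bar> \<le> alpha_mix M F n"
proof -
  have "x \<le> 1" if x_in: "x \<in> {\<bar>measure M (A \<inter> C) - measure M A * measure M C\<bar> | k A C.
       A \<in> sets (F (-\<infinity>) (ereal (real k))) \<and> C \<in> sets (F (ereal (real (k + n))) \<infinity>)}" for x
  proof -
    obtain A C where x: "x = \<bar>measure M (A \<inter> C) - measure M A * measure M C\<bar>"
      using x_in by blast
    have "measure M A * measure M C \<le> 1"
      by (intro mult_le_one) (simp_all add: P.prob_le_1)
    moreover have "0 \<le> measure M A * measure M C" by simp
    ultimately show ?thesis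
      unfolding x abs_le_iff using P.prob_le_1[of "A \<inter> C"] measure_nonneg[of M "A \<inter> C"] by linarith
  qed
  then show ?thesis
    unfolding alpha_mix_def using assms by (intro cSup_upper bdd_aboveI) blast+
qed

lemma alpha_nonneg: "alpha_mix M F n \<ge> 0"
  using alpha_upper[where A="{}" and k=0 and C="{}" and n=n] by (simp add: sets.empty_sets)

text \<open>The window \<open>[t - h, t + h]\<close> on which \<open>X j t\<close> is approximated in the definition of beta.\<close>
definition window :: "nat \<Rightarrow> nat \<Rightarrow> 'a measure" where
  "window t h = F (ereal (real_of_int (int t - int h))) (ereal (real (t + h)))"

lemma window_sub: "subalgebra M (window t h)" unfolding window_def by (rule F_sub)

lemma beta_upper:
  assumes j: "j \<in> {1..L}"
  shows "(\<integral>\<omega>. \<bar>X j t \<omega> - real_cond_exp M (window t h) (X j t) \<omega>\<bar> \<partial>M) \<le> beta_approx M F (X j) h"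
proof -
  have bd: "x \<le> 2 * B" if x_in: "x \<in> {(\<integral>\<omega>. \<bar>X j m \<omega> - real_cond_exp M (window m h) (X j m) \<omega>\<bar> \<partial>M) | m. True}"
    for x
  proof -
    obtain m where x: "x = (\<integral>\<omega>. \<bar>X j m \<omega> - real_cond_exp M (window m h) (X j m) \<omega>\<bar> \<partial>M)"
      using x_in by blast
    have "AE \<omega> in M. \<bar>real_cond_exp M (window m h) (X j m) \<omega>\<bar> \<le> B"
      by (rule real_cond_exp_AE_abs_le[OF prob window_sub X_meas[OF j] X_bound[OF j]])
    then have "AE \<omega> in M. \<bar>X j m \<omega> - real_cond_exp M (window m h) (X j m) \<omega>\<bar> \<le> 2 * B"
      using X_bound[OF j, of m] by eventually_elim auto
    then have "x \<le> (\<integral>\<omega>. 2 * B \<partial>M)"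
      unfolding x by (intro integral_mono_AE') (use B_ge1 in auto)
    then show ?thesis by (simp add: P.prob_space)
  qed
  show ?thesis
    unfolding beta_approx_def window_def[symmetric] by (rule cSup_upper[OF _ bdd_aboveI[OF bd]]) auto
qed

lemma beta_nonneg: "j \<in> {1..L} \<Longrightarrow> beta_approx M F (X j) h \<ge> 0"
  using beta_upper[of j 0 h] integral_nonneg_AE[of _ M] by (smt (verit) AE_I2 abs_ge_zero)

lemma beta_le_Max:
  "j \<in> {1..L} \<Longrightarrow> beta_approx M F (X j) h \<le> Max ((\<lambda>j. beta_approx M F (X j) h) ` {1..L})"
  by (rule Max_ge) auto

lemma beta_bound: "j \<in> {1..L} \<Longrightarrow> beta_approx M F (X j) h \<le> exp (- \<kappa> * real h) / \<kappa>"
  using beta_le_Max[of j h] C1(2)[of h] alpha_nonneg[of h] by linarith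

lemma alpha_bound: "alpha_mix M F h \<le> exp (- \<kappa> * real h) / \<kappa>"
proof -
  have "1 \<in> {1..L}" using l_pos by simp
  then have "Max ((\<lambda>j. beta_approx M F (X j) h) ` {1..L}) \<ge> 0"
    using beta_le_Max[of 1 h] beta_nonneg[of 1 h] by linarith
  then show ?thesis using C1(2)[of h] by linarith
qed

subsection \<open>The strong mixing covariance inequality\<close>

lemma indicator_covariance_le_alpha:
  assumes A: "A1 \<in> sets (F (-\<infinity>) (ereal (real k)))" "A2 \<in> sets (F (-\<infinity>) (ereal (real k)))"
    and C: "C1 \<in> sets (F (ereal (real (k + n))) \<infinity>)" "C2 \<in> sets (F (ereal (real (k + n))) \<infinity>)"
  shows "\<bar>(\<integral>x. (indicator C1 x - indicator C2 x) * (indicator A1 x - indicator A2 x) \<partial>M)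
     - (\<integral>x. (indicator C1 x - indicator C2 x :: real) \<partial>M) * (\<integral>x. (indicator A1 x - indicator A2 x :: real) \<partial>M)\<bar>
     \<le> 4 * alpha_mix M F n"
proof -
  have AM: "A1 \<in> sets M" "A2 \<in> sets M" and CM: "C1 \<in> sets M" "C2 \<in> sets M"
    using A C F_sub unfolding subalgebra_def by auto
  have ind: "integrable M (indicator S :: 'a \<Rightarrow> real)" "S \<inter> space M = S" if "S \<in> sets M" for S
    using that P.emeasure_finite[of S] sets.sets_into_space[OF that]
    by (auto simp: integrable_indicator_iff less_top[symmetric])
  have prod: "(\<lambda>x. (indicator C1 x - indicator C2 x) * (indicator A1 x - indicator A2 x) :: real) =
     (\<lambda>x. indicator (A1 \<inter> C1) x - indicator (A1 \<inter> C2) x - indicator (A2 \<inter> C1) x + indicator (A2 \<inter> C2) x)"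
    by (rule ext) (simp add: indicator_inter_arith algebra_simps)
  have eI: "(\<integral>x. (indicator C1 x - indicator C2 x) * (indicator A1 x - indicator A2 x) \<partial>M)
      = measure M (A1 \<inter> C1) - measure M (A1 \<inter> C2) - measure M (A2 \<inter> C1) + measure M (A2 \<inter> C2)"
    unfolding prod using AM CM by (simp add: ind sets.Int)
  have eC: "(\<integral>x. (indicator C1 x - indicator C2 x :: real) \<partial>M) = measure M C1 - measure M C2"
    and eA: "(\<integral>x. (indicator A1 x - indicator A2 x :: real) \<partial>M) = measure M A1 - measure M A2"
    using AM CM by (simp_all add: ind)
  have "\<bar>measure M (A1 \<inter> C1) - measure M A1 * measure M C1\<bar> \<le> alpha_mix M F n"
    "\<bar>measure M (A1 \<inter> C2) - measure M A1 * measure M C2\<bar> \<le> alpha_mix M F n"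
    "\<bar>measure M (A2 \<inter> C1) - measure M A2 * measure M C1\<bar> \<le> alpha_mix M F n"
    "\<bar>measure M (A2 \<inter> C2) - measure M A2 * measure M C2\<bar> \<le> alpha_mix M F n"
    using A C by (simp_all add: alpha_upper)
  moreover have "(measure M C1 - measure M C2) * (measure M A1 - measure M A2) =
     measure M A1 * measure M C1 - measure M A1 * measure M C2
     - measure M A2 * measure M C1 + measure M A2 * measure M C2"
    by (simp add: algebra_simps)
  ultimately show ?thesis unfolding eI eC eA abs_le_iff by (intro conjI; linarith)
qed

text \<open>Covariance bound for bounded functions measurable w.r.t.\ the past up to \<open>k\<close> and the
  future from \<open>k + n\<close>: two applications of the sign-function estimate reduce it to
  indicators.\<close>
lemma covariance_le_alpha:
  fixes V W :: "'a \<Rightarrow> real"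
  assumes Vm: "V \<in> borel_measurable (F (-\<infinity>) (ereal (real k)))" and Vb: "AE x in M. \<bar>V x\<bar> \<le> b"
    and Wm: "W \<in> borel_measurable (F (ereal (real (k + n))) \<infinity>)" and Wb: "AE x in M. \<bar>W x\<bar> \<le> c"
  shows "\<bar>(\<integral>x. V x * W x \<partial>M) - (\<integral>x. V x \<partial>M) * (\<integral>x. W x \<partial>M)\<bar> \<le> 4 * b * c * alpha_mix M F n"
proof -
  define G1 where "G1 = F (-\<infinity>) (ereal (real k))"
  define G2 where "G2 = F (ereal (real (k + n))) \<infinity>"
  have G1: "subalgebra M G1" and G2: "subalgebra M G2" unfolding G1_def G2_def by (rule F_sub)+
  have sp: "space G1 = space M" "space G2 = space M" using G1 G2 unfolding subalgebra_def by auto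
  have b0: "b \<ge> 0" and c0: "c \<ge> 0" using AE_abs_bound_nonneg[OF prob] Vb Wb by blast+
  have WmM: "W \<in> borel_measurable M" using Wm G2 unfolding G2_def by (rule measurable_from_subalg[rotated])
  define \<xi> where "\<xi> x = sgn (real_cond_exp M G1 W x - (\<integral>x. W x \<partial>M))" for x
  have VW: "\<bar>(\<integral>x. V x * W x \<partial>M) - (\<integral>x. V x \<partial>M) * (\<integral>x. W x \<partial>M)\<bar>
     \<le> b * ((\<integral>x. \<xi> x * W x \<partial>M) - (\<integral>x. \<xi> x \<partial>M) * (\<integral>x. W x \<partial>M))"
    unfolding \<xi>_def by (rule covariance_le_sign_covariance[OF prob G1 Vm[folded G1_def] Vb WmM Wb])
  have \<xi>m: "\<xi> \<in> borel_measurable M" unfolding \<xi>_def by measurable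
  have \<xi>b: "AE x in M. \<bar>\<xi> x\<bar> \<le> 1" unfolding \<xi>_def by (simp add: abs_sgn_eq)
  define \<eta> where "\<eta> x = sgn (real_cond_exp M G2 \<xi> x - (\<integral>x. \<xi> x \<partial>M))" for x
  have W\<xi>: "\<bar>(\<integral>x. W x * \<xi> x \<partial>M) - (\<integral>x. W x \<partial>M) * (\<integral>x. \<xi> x \<partial>M)\<bar>
     \<le> c * ((\<integral>x. \<eta> x * \<xi> x \<partial>M) - (\<integral>x. \<eta> x \<partial>M) * (\<integral>x. \<xi> x \<partial>M))"
    unfolding \<eta>_def by (rule covariance_le_sign_covariance[OF prob G2 Wm[folded G2_def] Wb \<xi>m \<xi>b])
  obtain A1 A2 where A: "A1 \<in> sets G1" "A2 \<in> sets G1"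
    and \<xi>_ind: "\<And>x. x \<in> space M \<Longrightarrow> \<xi> x = indicator A1 x - indicator A2 x"
    using sgn_indicator_diff[of "\<lambda>x. real_cond_exp M G1 W x - (\<integral>x. W x \<partial>M)" G1]
    unfolding \<xi>_def sp by auto
  obtain C1 C2 where C: "C1 \<in> sets G2" "C2 \<in> sets G2"
    and \<eta>_ind: "\<And>x. x \<in> space M \<Longrightarrow> \<eta> x = indicator C1 x - indicator C2 x"
    using sgn_indicator_diff[of "\<lambda>x. real_cond_exp M G2 \<xi> x - (\<integral>x. \<xi> x \<partial>M)" G2]
    unfolding \<eta>_def sp by auto
  have "(\<integral>x. \<eta> x * \<xi> x \<partial>M) - (\<integral>x. \<eta> x \<partial>M) * (\<integral>x. \<xi> x \<partial>M)
     = (\<integral>x. (indicator C1 x - indicator C2 x) * (indicator A1 x - indicator A2 x) \<partial>M)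
     - (\<integral>x. (indicator C1 x - indicator C2 x :: real) \<partial>M) * (\<integral>x. (indicator A1 x - indicator A2 x :: real) \<partial>M)"
    using \<xi>_ind \<eta>_ind by (simp cong: Bochner_Integration.integral_cong)
  also have "\<dots> \<le> 4 * alpha_mix M F n"
    using indicator_covariance_le_alpha[OF A[unfolded G1_def] C[unfolded G2_def]] by linarith
  finally have "c * ((\<integral>x. \<eta> x * \<xi> x \<partial>M) - (\<integral>x. \<eta> x \<partial>M) * (\<integral>x. \<xi> x \<partial>M))
      \<le> c * (4 * alpha_mix M F n)"
    using c0 by (rule mult_left_mono)
  moreover have "(\<integral>x. \<xi> x * W x \<partial>M) - (\<integral>x. \<xi> x \<partial>M) * (\<integral>x. W x \<partial>M)
      \<le> \<bar>(\<integral>x. W x * \<xi> x \<partial>M) - (\<integral>x. W x \<partial>M) * (\<integral>x. \<xi> x \<partial>M)\<bar>"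
    by (simp add: mult.commute)
  ultimately have "(\<integral>x. \<xi> x * W x \<partial>M) - (\<integral>x. \<xi> x \<partial>M) * (\<integral>x. W x \<partial>M) \<le> c * (4 * alpha_mix M F n)"
    using W\<xi> by linarith
  then have "b * ((\<integral>x. \<xi> x * W x \<partial>M) - (\<integral>x. \<xi> x \<partial>M) * (\<integral>x. W x \<partial>M)) \<le> b * (c * (4 * alpha_mix M F n))"
    using b0 by (rule mult_left_mono)
  then show ?thesis using VW by (simp add: mult_ac)
qed

subsection \<open>Decorrelation of products on separated time ranges\<close>

lemma value_product_bound:
  "value_product X L P U s \<Longrightarrow> U \<in> borel_measurable M \<and> (AE \<omega> in M. \<bar>U \<omega>\<bar> \<le> B ^ s)"
proof (induction rule: value_product.induct)
  case unit then show ?case using B_ge1 by simp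
next
  case (factor U s j t)
  have Um: "U \<in> borel_measurable M" and Ub: "AE \<omega> in M. \<bar>U \<omega>\<bar> \<le> B ^ s"
    using factor.IH by auto
  have "AE \<omega> in M. \<bar>U \<omega> * X j t \<omega>\<bar> \<le> B ^ s * B"
    using Ub X_bound[OF factor.hyps(2), of t] by eventually_elim (rule abs_mult_le)
  moreover have "(\<lambda>\<omega>. U \<omega> * X j t \<omega>) \<in> borel_measurable M"
    using Um X_meas[OF factor.hyps(2)] by measurable
  ultimately show ?case by (simp add: mult.commute)
qed

lemma value_product_integral_bound: "value_product X L P U s \<Longrightarrow> \<bar>\<integral>\<omega>. U \<omega> \<partial>M\<bar> \<le> B ^ s"
  using value_product_bound abs_integral_le_AE_bound[OF prob] by blast

text \<open>A product of \<open>s\<close> values at times \<open>t\<close> whose windows \<open>[t - h, t + h]\<close> lie in \<open>G\<close> is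
  \<open>L\<^sup>1\<close>-approximated by a bounded \<open>G\<close>-measurable function up to \<open>s B\<^sup>s e\<^sup>-\<^sup>\<kappa>\<^sup>h / \<kappa>\<close>
  (replace each factor by its conditional expectation on its window).\<close>
lemma value_product_approx:
  assumes "value_product X L P U s" and G: "subalgebra M G"
    and windows: "\<And>t. P t \<Longrightarrow> sets (window t h) \<subseteq> sets G"
  shows "\<exists>V. V \<in> borel_measurable G \<and> (AE \<omega> in M. \<bar>V \<omega>\<bar> \<le> B ^ s)
     \<and> (\<integral>\<omega>. \<bar>U \<omega> - V \<omega>\<bar> \<partial>M) \<le> s * B ^ s * (exp (- \<kappa> * real h) / \<kappa>)"
  using assms(1)
proof (induction rule: value_product.induct)
  case unit
  show ?case by (intro exI[where x="\<lambda>\<omega>. 1"]) simp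
next
  case (factor U s j t)
  define e where "e = exp (- \<kappa> * real h) / \<kappa>"
  have e0: "e \<ge> 0" unfolding e_def using C1(1) by simp
  obtain V where Vm: "V \<in> borel_measurable G" and Vb: "AE \<omega> in M. \<bar>V \<omega>\<bar> \<le> B ^ s"
    and UV: "(\<integral>\<omega>. \<bar>U \<omega> - V \<omega>\<bar> \<partial>M) \<le> s * B ^ s * e"
    using factor.IH unfolding e_def by blast
  have Um: "U \<in> borel_measurable M" and Ub: "AE \<omega> in M. \<bar>U \<omega>\<bar> \<le> B ^ s"
    using value_product_bound[OF factor.hyps(1)] by auto
  define Y where "Y = real_cond_exp M (window t h) (X j t)"
  have sub: "subalgebra G (window t h)"
    using windows[OF factor.hyps(3)] G window_sub unfolding subalgebra_def by auto
  have Ym: "Y \<in> borel_measurable G" unfolding Y_def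
    by (rule measurable_from_subalg[OF sub]) simp
  have VmM: "V \<in> borel_measurable M" using Vm G by (rule measurable_from_subalg[rotated])
  have Xm: "X j t \<in> borel_measurable M" using X_meas factor.hyps(2) by blast
  have Xb: "AE \<omega> in M. \<bar>X j t \<omega>\<bar> \<le> B" using X_bound[OF factor.hyps(2)] .
  have Yb: "AE \<omega> in M. \<bar>Y \<omega>\<bar> \<le> B" unfolding Y_def
    by (rule real_cond_exp_AE_abs_le[OF prob window_sub Xm Xb])
  have XY: "(\<integral>\<omega>. \<bar>X j t \<omega> - Y \<omega>\<bar> \<partial>M) \<le> e"
    unfolding Y_def e_def using beta_upper[OF factor.hyps(2), of t h] beta_bound[OF factor.hyps(2), of h]
    by linarith
  have "(\<integral>\<omega>. \<bar>U \<omega> * X j t \<omega> - V \<omega> * Y \<omega>\<bar> \<partial>M)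
      \<le> B ^ s * (\<integral>\<omega>. \<bar>X j t \<omega> - Y \<omega>\<bar> \<partial>M) + B * (\<integral>\<omega>. \<bar>U \<omega> - V \<omega>\<bar> \<partial>M)"
    by (rule integral_abs_product_diff_le[OF prob Um VmM Xm _ Ub Vb Xb Yb]) (simp add: Y_def)
  also have "\<dots> \<le> B ^ s * e + B * (s * B ^ s * e)"
    using B_ge1 XY UV by (intro add_mono mult_left_mono) auto
  also have "\<dots> \<le> Suc s * B ^ Suc s * e"
  proof -
    have "B ^ s * e \<le> B ^ Suc s * e"
      using B_ge1 e0 by (intro mult_right_mono) (auto simp: power_increasing)
    then show ?thesis by (simp add: algebra_simps)
  qed
  finally show ?case
  proof (intro exI[where x="\<lambda>\<omega>. V \<omega> * Y \<omega>"] conjI)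
    show "(\<lambda>\<omega>. V \<omega> * Y \<omega>) \<in> borel_measurable G" using Vm Ym by measurable
    show "AE \<omega> in M. \<bar>V \<omega> * Y \<omega>\<bar> \<le> B ^ Suc s"
      using Vb Yb by eventually_elim (simp only: power_Suc2 abs_mult_le)
  qed (simp add: e_def)
qed

text \<open>Both are approximated on windows of width \<open>g/3\<close>, leaving a
  gap of at least \<open>g/3\<close> between past and future for the mixing inequality.\<close>
lemma value_product_decorrelation:
  assumes U: "value_product X L (\<lambda>t. t \<le> T) U s1" and W: "value_product X L (\<lambda>t. T + g \<le> t) W s2"
  shows "\<bar>(\<integral>x. U x * W x \<partial>M) - (\<integral>x. U x \<partial>M) * (\<integral>x. W x \<partial>M)\<bar>
          \<le> (2 * real (s1 + s2) + 4) * B ^ (s1 + s2) * (exp (- \<kappa> * real (g div 3)) / \<kappa>)"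
proof -
  define h where "h = g div 3"
  define n' where "n' = g - 2 * h"
  define k where "k = T + h"
  define e where "e = exp (- \<kappa> * real h) / \<kappa>"
  define b1 where "b1 = B ^ s1"
  define b2 where "b2 = B ^ s2"
  have e0: "e \<ge> 0" unfolding e_def using C1(1) by simp
  have b1: "b1 \<ge> 1" and b2: "b2 \<ge> 1" unfolding b1_def b2_def using B_ge1 by simp_all
  have past: "sets (window t h) \<subseteq> sets (F (-\<infinity>) (ereal (real k)))" if "t \<le> T" for t
    unfolding window_def k_def by (rule F_mono) (use that in auto)
  have future: "sets (window t h) \<subseteq> sets (F (ereal (real (k + n'))) \<infinity>)" if "T + g \<le> t" for t
  proof -
    have "real (k + n') \<le> real_of_int (int t - int h)"
      using that unfolding k_def n'_def h_def by linarith
    then show ?thesis unfolding window_def by (intro F_mono) auto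
  qed
  obtain V where Vm: "V \<in> borel_measurable (F (-\<infinity>) (ereal (real k)))" and Vb: "AE \<omega> in M. \<bar>V \<omega>\<bar> \<le> b1"
    and UV: "(\<integral>\<omega>. \<bar>U \<omega> - V \<omega>\<bar> \<partial>M) \<le> s1 * b1 * e"
    using value_product_approx[OF U F_sub past] unfolding e_def b1_def by blast
  obtain V' where V'm: "V' \<in> borel_measurable (F (ereal (real (k + n'))) \<infinity>)" and V'b: "AE \<omega> in M. \<bar>V' \<omega>\<bar> \<le> b2"
    and WV: "(\<integral>\<omega>. \<bar>W \<omega> - V' \<omega>\<bar> \<partial>M) \<le> s2 * b2 * e"
    using value_product_approx[OF W F_sub future] unfolding e_def b2_def by blast
  have Um: "U \<in> borel_measurable M" and Ub: "AE \<omega> in M. \<bar>U \<omega>\<bar> \<le> b1"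
    and Wm: "W \<in> borel_measurable M" and Wb: "AE \<omega> in M. \<bar>W \<omega>\<bar> \<le> b2"
    using value_product_bound[OF U] value_product_bound[OF W] unfolding b1_def b2_def by auto
  have VmM: "V \<in> borel_measurable M" using Vm F_sub by (rule measurable_from_subalg[rotated])
  have V'mM: "V' \<in> borel_measurable M" using V'm F_sub by (rule measurable_from_subalg[rotated])
  have approx: "\<bar>((\<integral>x. U x * W x \<partial>M) - (\<integral>x. U x \<partial>M) * (\<integral>x. W x \<partial>M))
      - ((\<integral>x. V x * V' x \<partial>M) - (\<integral>x. V x \<partial>M) * (\<integral>x. V' x \<partial>M))\<bar>
      \<le> 2 * (b1 * (s2 * b2 * e) + b2 * (s1 * b1 * e))"
  proof -
    have "2 * (b1 * (\<integral>x. \<bar>W x - V' x\<bar> \<partial>M) + b2 * (\<integral>x. \<bar>U x - V x\<bar> \<partial>M))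
        \<le> 2 * (b1 * (s2 * b2 * e) + b2 * (s1 * b1 * e))"
      using UV WV b1 b2 by (intro mult_left_mono add_mono) auto
    with covariance_perturbation[OF prob Um VmM Wm V'mM Ub Vb Wb V'b] show ?thesis by linarith
  qed
  have "alpha_mix M F n' \<le> e"
  proof -
    have "exp (- \<kappa> * real n') \<le> exp (- \<kappa> * real h)" using C1(1) unfolding n'_def h_def by simp
    then show ?thesis using alpha_bound[of n'] C1(1) unfolding e_def
      by (meson divide_right_mono less_imp_le order_trans)
  qed
  then have "4 * b1 * b2 * alpha_mix M F n' \<le> 4 * (b1 * b2 * e)" using b1 b2 by simp
  then have "\<bar>(\<integral>x. V x * V' x \<partial>M) - (\<integral>x. V x \<partial>M) * (\<integral>x. V' x \<partial>M)\<bar> \<le> 4 * (b1 * b2 * e)"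
    using covariance_le_alpha[OF Vm Vb V'm V'b] by linarith
  then have "\<bar>(\<integral>x. U x * W x \<partial>M) - (\<integral>x. U x \<partial>M) * (\<integral>x. W x \<partial>M)\<bar>
      \<le> (2 * real (s1 + s2) + 4) * (b1 * b2 * e)"
    using approx by (simp add: abs_le_iff algebra_simps)
  then show ?thesis unfolding b1_def b2_def e_def h_def by (simp add: power_add mult_ac)
qed

definition mix_rate :: "nat \<Rightarrow> real" where "mix_rate g = exp (- \<kappa> * real (g div 3)) / \<kappa>"
definition cL :: real where "cL = (4 * real L + 4) * B ^ (2 * L)"

lemma cL_nonneg: "cL \<ge> 0" unfolding cL_def using B_ge1 by simp

lemma mix_rate_nonneg: "mix_rate g \<ge> 0" unfolding mix_rate_def using C1(1) by simp

lemma value_product_decorrelation_uniform: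
  assumes U: "value_product X L (\<lambda>t. t \<le> T) U s1" and W: "value_product X L (\<lambda>t. T + g \<le> t) W s2"
    and s: "s1 + s2 \<le> 2 * L"
  shows "\<bar>(\<integral>x. U x * W x \<partial>M) - (\<integral>x. U x \<partial>M) * (\<integral>x. W x \<partial>M)\<bar> \<le> cL * mix_rate g"
proof -
  have "(2 * real (s1 + s2) + 4) * B ^ (s1 + s2) \<le> (4 * real L + 4) * B ^ (2 * L)"
    using s B_ge1 by (intro mult_mono power_increasing) auto
  then have "(2 * real (s1 + s2) + 4) * B ^ (s1 + s2) * mix_rate g \<le> cL * mix_rate g"
    unfolding cL_def by (rule mult_right_mono) (rule mix_rate_nonneg)
  then show ?thesis using value_product_decorrelation[OF U W] unfolding mix_rate_def by linarith
qed

lemma prefix_value_product: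
  fixes W :: "nat \<Rightarrow> 'a \<Rightarrow> real" and lo hi s g :: "nat \<Rightarrow> nat"
  assumes Wg: "\<And>j. j \<in> {1..L} \<Longrightarrow> value_product X L (\<lambda>t. lo j \<le> t \<and> t \<le> hi j) (W j) (s j)"
    and gap: "\<And>j. j \<in> {2..L} \<Longrightarrow> hi (j - 1) + g j \<le> lo j"
    and lh: "\<And>j. j \<in> {1..L} \<Longrightarrow> lo j \<le> hi j"
    and i: "1 \<le> i" "i \<le> L"
  shows "value_product X L (\<lambda>t. t \<le> hi i) (\<lambda>\<omega>. \<Prod>j=1..i. W j \<omega>) (\<Sum>j=1..i. s j)"
  using i
proof (induction i rule: nat_induct_at_least)
  case base
  have "value_product X L (\<lambda>t. t \<le> hi 1) (W 1) (s 1)"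
    by (rule value_product_mono[OF Wg]) (use base in auto)
  then show ?case by simp
next
  case (Suc i)
  have "hi i \<le> hi (Suc i)" using gap[of "Suc i"] lh[of "Suc i"] Suc by fastforce
  then have "value_product X L (\<lambda>t. t \<le> hi (Suc i)) (\<lambda>\<omega>. \<Prod>j=1..i. W j \<omega>) (\<Sum>j=1..i. s j)"
    using Suc by (auto intro: value_product_mono)
  moreover have "value_product X L (\<lambda>t. t \<le> hi (Suc i)) (W (Suc i)) (s (Suc i))"
    by (rule value_product_mono[OF Wg]) (use Suc in auto)
  ultimately show ?case using value_product_mult Suc.hyps by fastforce
qed

text \<open>If the blocks have at most two factors and approximate means \<open>w j\<close> with errors \<open>\<epsilon> j\<close>,
  the integral of the product of the first \<open>i\<close> blocks is the product of the \<open>w j\<close> up to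
  these errors and the decorrelation errors at the gaps: each new block decouples from the
  product of the previous ones.\<close>
lemma separated_product_integral_prefix:
  fixes W :: "nat \<Rightarrow> 'a \<Rightarrow> real" and lo hi s g :: "nat \<Rightarrow> nat" and w \<epsilon> :: "nat \<Rightarrow> real"
  assumes Wg: "\<And>j. j \<in> {1..L} \<Longrightarrow> value_product X L (\<lambda>t. lo j \<le> t \<and> t \<le> hi j) (W j) (s j)"
    and s2: "\<And>j. j \<in> {1..L} \<Longrightarrow> s j \<le> 2"
    and gap: "\<And>j. j \<in> {2..L} \<Longrightarrow> hi (j - 1) + g j \<le> lo j"
    and lh: "\<And>j. j \<in> {1..L} \<Longrightarrow> lo j \<le> hi j"
    and eps: "\<And>j. j \<in> {1..L} \<Longrightarrow> \<bar>(\<integral>\<omega>. W j \<omega> \<partial>M) - w j\<bar> \<le> \<epsilon> j"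
    and wb: "\<And>j. j \<in> {1..L} \<Longrightarrow> \<bar>w j\<bar> \<le> B ^ 2"
    and i: "1 \<le> i" "i \<le> L"
  shows "\<bar>(\<integral>\<omega>. (\<Prod>j=1..i. W j \<omega>) \<partial>M) - (\<Prod>j=1..i. w j)\<bar>
     \<le> B ^ (2 * i) * ((\<Sum>j=1..i. \<epsilon> j) + (\<Sum>j=2..i. cL * mix_rate (g j)))"
  using i
proof (induction i rule: nat_induct_at_least)
  case base
  have j1: "1 \<in> {1..L}" using base by simp
  have "0 \<le> \<epsilon> 1" using eps[OF j1] by (meson abs_ge_zero order_trans)
  moreover have "1 \<le> B ^ 2" using B_ge1 by (rule one_le_power)
  ultimately have "\<epsilon> 1 \<le> B ^ 2 * \<epsilon> 1" by (simp add: mult_le_cancel_right1)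
  then show ?case using eps[OF j1] by simp
next
  case (Suc i)
  define U where "U \<omega> = (\<Prod>j=1..i. W j \<omega>)" for \<omega>
  define R where "R = (\<Sum>j=1..i. \<epsilon> j) + (\<Sum>j=2..i. cL * mix_rate (g j))"
  have j: "Suc i \<in> {1..L}" "Suc i \<in> {2..L}" using Suc by auto
  have U: "value_product X L (\<lambda>t. t \<le> hi i) U (\<Sum>j=1..i. s j)"
    unfolding U_def
    by (rule prefix_value_product[where W=W and lo=lo and hi=hi and s=s and g=g, OF Wg gap lh])
      (use Suc in auto)
  have sU: "(\<Sum>j=1..i. s j) \<le> 2 * i"
    using sum_bounded_above[of "{1..i}" s 2] s2 Suc by auto
  have Wnext: "value_product X L (\<lambda>t. hi i + g (Suc i) \<le> t) (W (Suc i)) (s (Suc i))"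
    by (rule value_product_mono[OF Wg[OF j(1)]]) (use gap[OF j(2)] in auto)
  have dec: "\<bar>(\<integral>\<omega>. U \<omega> * W (Suc i) \<omega> \<partial>M) - (\<integral>\<omega>. U \<omega> \<partial>M) * (\<integral>\<omega>. W (Suc i) \<omega> \<partial>M)\<bar>
      \<le> cL * mix_rate (g (Suc i))"
    by (rule value_product_decorrelation_uniform[OF U Wnext]) (use sU s2[OF j(1)] Suc in auto)
  have Ub: "\<bar>\<integral>\<omega>. U \<omega> \<partial>M\<bar> \<le> B ^ (2 * i)"
    using value_product_integral_bound[OF U] B_ge1 sU by (meson order_trans power_increasing)
  have "\<bar>(\<integral>\<omega>. U \<omega> * W (Suc i) \<omega> \<partial>M) - (\<Prod>j=1..i. w j) * w (Suc i)\<bar>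
      \<le> cL * mix_rate (g (Suc i)) + B ^ (2 * i) * \<epsilon> (Suc i) + B ^ 2 * (B ^ (2 * i) * R)"
    by (rule product_perturbation_le[OF dec Ub eps[OF j(1)] wb[OF j(1)]])
      (use Suc in \<open>simp add: U_def R_def\<close>)
  also have "\<dots> \<le> B ^ (2 * Suc i) * (R + \<epsilon> (Suc i) + cL * mix_rate (g (Suc i)))"
  proof -
    have B: "B ^ (2 * i) \<le> B ^ (2 * Suc i)" "1 \<le> B ^ (2 * Suc i)"
      by (rule power_increasing, simp, rule B_ge1) (rule one_le_power[OF B_ge1])
    have "cL * mix_rate (g (Suc i)) \<le> B ^ (2 * Suc i) * (cL * mix_rate (g (Suc i)))"
      using mult_right_mono[OF B(2) mult_nonneg_nonneg[OF cL_nonneg mix_rate_nonneg]] by simp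
    moreover have "B ^ (2 * i) * \<epsilon> (Suc i) \<le> B ^ (2 * Suc i) * \<epsilon> (Suc i)"
      using B(1) eps[OF j(1)] by (intro mult_right_mono) (auto intro: order_trans[OF abs_ge_zero])
    moreover have "B ^ (2 * Suc i) = B ^ 2 * B ^ (2 * i)"
      by (simp only: mult_Suc_right power_add)
    then have "B ^ 2 * (B ^ (2 * i) * R) = B ^ (2 * Suc i) * R" by (simp only: mult.assoc)
    ultimately show ?thesis unfolding distrib_left by linarith
  qed
  also have "R + \<epsilon> (Suc i) + cL * mix_rate (g (Suc i))
      = (\<Sum>j=1..Suc i. \<epsilon> j) + (\<Sum>j=2..Suc i. cL * mix_rate (g j))"
    unfolding R_def using Suc.hyps by simp
  finally show ?case unfolding U_def by (simp add: mult.commute)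
qed

lemma separated_product_integral:
  fixes W :: "nat \<Rightarrow> 'a \<Rightarrow> real" and lo hi s g :: "nat \<Rightarrow> nat" and w \<epsilon> :: "nat \<Rightarrow> real"
  assumes "\<And>j. j \<in> {1..L} \<Longrightarrow> value_product X L (\<lambda>t. lo j \<le> t \<and> t \<le> hi j) (W j) (s j)"
    and "\<And>j. j \<in> {1..L} \<Longrightarrow> s j \<le> 2"
    and "\<And>j. j \<in> {2..L} \<Longrightarrow> hi (j - 1) + g j \<le> lo j"
    and "\<And>j. j \<in> {1..L} \<Longrightarrow> lo j \<le> hi j"
    and "\<And>j. j \<in> {1..L} \<Longrightarrow> \<bar>(\<integral>\<omega>. W j \<omega> \<partial>M) - w j\<bar> \<le> \<epsilon> j"
    and "\<And>j. j \<in> {1..L} \<Longrightarrow> \<bar>w j\<bar> \<le> B ^ 2"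
  shows "\<bar>(\<integral>\<omega>. (\<Prod>j=1..L. W j \<omega>) \<partial>M) - (\<Prod>j=1..L. w j)\<bar>
     \<le> B ^ (2 * L) * ((\<Sum>j=1..L. \<epsilon> j) + (\<Sum>j=2..L. cL * mix_rate (g j)))"
  by (rule separated_product_integral_prefix[where W=W and lo=lo and hi=hi and s=s and g=g and w=w
        and \<epsilon>=\<epsilon> and i=L, OF assms l_pos order_refl])

definition a :: "nat \<Rightarrow> real" where "a j = mean0 M X j"

lemma moment_shift:
  assumes j: "j \<in> {1..L}"
  shows "(\<integral>\<omega>. X j t \<omega> ^ s \<partial>M) = (\<integral>\<omega>. X j 0 \<omega> ^ s \<partial>M)"
proof -
  have "(\<lambda>x::nat \<Rightarrow> real. x 0 ^ s) \<in> borel_measurable (PiM {0} (\<lambda>_. borel))" by measurable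
  from stationary_integral[OF X_stat[OF j] X_meas[OF j] _ this, of t] show ?thesis by simp
qed

lemma mean_shift: "j \<in> {1..L} \<Longrightarrow> (\<integral>\<omega>. X j t \<omega> \<partial>M) = a j"
  using moment_shift[of j t 1] unfolding a_def mean0_def by simp

lemma lag_covariance_shift:
  assumes j: "j \<in> {1..L}"
  shows "(\<integral>\<omega>. (X j (t + d) \<omega> - c) * (X j t \<omega> - c) \<partial>M) = (\<integral>\<omega>. (X j d \<omega> - c) * (X j 0 \<omega> - c) \<partial>M)"
proof -
  have "(\<lambda>x::nat \<Rightarrow> real. (x d - c) * (x 0 - c)) \<in> borel_measurable (PiM {0, d} (\<lambda>_. borel))"
    by measurable
  from stationary_integral[OF X_stat[OF j] X_meas[OF j] _ this, of t] show ?thesis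
    by (simp add: add.commute)
qed

lemma a_bound: "j \<in> {1..L} \<Longrightarrow> \<bar>a j\<bar> \<le> B"
  using abs_integral_le_AE_bound[OF prob X_meas X_bound, of j 0] mean_shift[of j 0] by simp

subsection \<open>Growth of the times \<open>q\<^sub>j(k)\<close>\<close>

definition kmin :: "nat \<Rightarrow> nat" where "kmin N = nat \<lfloor>real N powr (1 - \<gamma>)\<rfloor>"

lemma q_gap:
  assumes j: "j \<in> {2..L}" and u: "n\<^sub>0 \<le> u" "u \<le> v"
  shows "real (q j u) + real (v - u) * real u powr \<gamma> \<le> real (q j v)"
proof -
  have "real (q j u) + real d * real u powr \<gamma> \<le> real (q j (u + d))" for d
  proof (induction d)
    case 0 then show ?case by simp
  next
    case (Suc d)
    have "real (q j (u + d)) + real (u + d) powr \<gamma> \<le> real (q j (u + d + 1))"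
      using C3[OF j, of "u + d"] u by simp
    moreover have "real u powr \<gamma> \<le> real (u + d) powr \<gamma>"
      using gamma by (intro powr_mono2) auto
    ultimately show ?case using Suc.IH by (simp add: algebra_simps)
  qed
  from this[of "v - u"] show ?thesis using u(2) by simp
qed

lemma q_mono:
  assumes j: "j \<in> {1..L}" and u: "n\<^sub>0 \<le> u" "u \<le> v"
  shows "q j u \<le> q j v"
proof (cases "j = 1")
  case True then show ?thesis using C2(2) u by simp
next
  case False
  then have "j \<in> {2..L}" using j by auto
  from q_gap[OF this u] have "real (q j u) \<le> real (q j v)"
    by (smt (verit) mult_nonneg_nonneg of_nat_0_le_iff powr_ge_zero)
  then show ?thesis by simp
qed

lemma kmin_facts:
  assumes adm: "n\<^sub>0 \<le> kmin N"
  shows "1 \<le> N" "kmin N \<le> N" "n\<^sub>0 \<le> N" "real N powr (1 - \<gamma>) \<le> 2 * real (kmin N)"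
proof -
  have K: "2 \<le> kmin N" using adm n0 by simp
  show N1: "1 \<le> N"
  proof (rule ccontr)
    assume "\<not> 1 \<le> N"
    then have "N = 0" by simp
    then have "kmin N = 0" unfolding kmin_def by simp
    then show False using K by simp
  qed
  define x where "x = real N powr (1 - \<gamma>)"
  have fl: "real (kmin N) \<le> x" "x < real (kmin N) + 1"
    unfolding kmin_def x_def using floor_correct[of "real N powr (1 - \<gamma>)"] by auto
  have "x \<le> real N powr 1" unfolding x_def using N1 gamma by (intro powr_mono) auto
  then show "kmin N \<le> N" using fl(1) N1 by simp
  then show "n\<^sub>0 \<le> N" using adm by simp
  show "real N powr (1 - \<gamma>) \<le> 2 * real (kmin N)" using fl(2) K unfolding x_def by linarith
qed

lemma q_at_N_ge:
  assumes adm: "n\<^sub>0 \<le> kmin N" and j: "j \<in> {1..L}"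
  shows "real N \<le> real (q j N)"
  using j
proof (induction j)
  case 0 then show ?case by simp
next
  case (Suc j)
  show ?case
  proof (cases "j = 0")
    case True
    then have "q (Suc j) N = r * N + p" using C2(2) by simp
    moreover have "N \<le> r * N" using C2(1) by simp
    ultimately have "N \<le> q (Suc j) N" by linarith
    then show ?thesis by simp
  next
    case False
    then have j1: "j \<in> {1..<L}" "j \<in> {1..L}" "Suc j \<in> {1..L}" using Suc.prems by auto
    have N: "n\<^sub>0 \<le> N" "kmin N \<le> N" "1 \<le> N" using kmin_facts[OF adm] by auto
    have "real (q j N) * real N powr \<gamma> \<le> real (q (Suc j) (kmin N))"
      using C4[OF j1(1) N(1)] unfolding kmin_def by simp
    moreover have "real (q j N) \<le> real (q j N) * real N powr \<gamma>"
      using N(3) gamma by (simp add: ge_one_powr_ge_zero mult_le_cancel_left1)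
    moreover have "q (Suc j) (kmin N) \<le> q (Suc j) N" using q_mono[OF j1(3)] adm N by simp
    ultimately show ?thesis using Suc.IH j1(2) by linarith
  qed
qed

text \<open>By (C4), all times of the \<open>j\<close>-th factor (\<open>j \<ge> 2\<close>) exceed all times of the \<open>(j-1)\<close>-th factor
  in the admissible range by at least \<open>N (N\<^sup>\<gamma> - 1)\<close>.\<close>
definition gap_between :: "nat \<Rightarrow> real" where "gap_between N = real N * (real N powr \<gamma> - 1)"

lemma factor_separation:
  assumes adm: "n\<^sub>0 \<le> kmin N" and j: "j \<in> {2..L}" and k: "kmin N \<le> k" "kmin N \<le> k'" "k' \<le> N"
  shows "q (j - 1) k' \<le> q j k" "gap_between N \<le> real (q j k - q (j - 1) k')"
proof -
  have N: "n\<^sub>0 \<le> N" "kmin N \<le> N" "1 \<le> N" using kmin_facts[OF adm] by auto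
  have j1: "j - 1 \<in> {1..<L}" "j - 1 \<in> {1..L}" "j \<in> {1..L}" "Suc (j - 1) = j" using j by auto
  have c4: "real (q (j - 1) N) * real N powr \<gamma> \<le> real (q j (kmin N))"
    using C4[OF j1(1) N(1)] j1(4) unfolding kmin_def by simp
  have "q j (kmin N) \<le> q j k" using q_mono[OF j1(3)] adm k by simp
  moreover have "q (j - 1) k' \<le> q (j - 1) N" using q_mono[OF j1(2)] adm k N by simp
  moreover have "gap_between N \<le> real (q (j - 1) N) * (real N powr \<gamma> - 1)"
    unfolding gap_between_def using q_at_N_ge[OF adm j1(2)] N(3) gamma
    by (intro mult_right_mono) (auto simp: ge_one_powr_ge_zero)
  ultimately have s: "real (q (j - 1) k') + gap_between N \<le> real (q j k)"
    using c4 by (simp add: algebra_simps)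
  moreover have "gap_between N \<ge> 0"
    unfolding gap_between_def using N(3) gamma by (simp add: ge_one_powr_ge_zero)
  ultimately show "q (j - 1) k' \<le> q j k" by simp
  then show "gap_between N \<le> real (q j k - q (j - 1) k')" using s by (simp add: of_nat_diff)
qed

text \<open>By (C3), the times of the \<open>j\<close>-th factor (\<open>j \<ge> 2\<close>) at \<open>k < k'\<close> differ by at least
  \<open>(k' - k) [N\<^sup>1\<^sup>-\<^sup>\<gamma>]\<^sup>\<gamma>\<close>.\<close>
definition gap_within :: "nat \<Rightarrow> nat \<Rightarrow> real" where "gap_within N d = real d * real (kmin N) powr \<gamma>"

lemma time_separation:
  assumes adm: "n\<^sub>0 \<le> kmin N" and j: "j \<in> {2..L}" and k: "kmin N \<le> k" "k \<le> k'"
  shows "gap_within N (k' - k) \<le> real (q j k' - q j k)"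
proof -
  have "real (q j k) + real (k' - k) * real k powr \<gamma> \<le> real (q j k')"
    using q_gap[OF j _ k(2)] adm k by simp
  moreover have "real (kmin N) powr \<gamma> \<le> real k powr \<gamma>" using k gamma by (intro powr_mono2) auto
  then have "gap_within N (k' - k) \<le> real (k' - k) * real k powr \<gamma>"
    unfolding gap_within_def by (intro mult_left_mono) auto
  ultimately show ?thesis by (simp add: of_nat_diff)
qed

text \<open>A decreasing majorant of \<open>mix_rate\<close> as a function of a real gap.\<close>
definition decay :: "real \<Rightarrow> real" where "decay G = exp \<kappa> / \<kappa> * exp (- (\<kappa> / 3) * G)"

lemma decay_nonneg: "decay G \<ge> 0" unfolding decay_def using C1(1) by simp

lemma decay_antimono: "G \<le> G' \<Longrightarrow> decay G' \<le> decay G"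
  unfolding decay_def using C1(1) by (intro mult_left_mono) (auto simp: divide_nonneg_pos)

lemma mix_rate_le_decay:
  assumes "G \<le> real g"
  shows "mix_rate g \<le> decay G"
proof -
  have "real g \<le> 3 * real (g div 3) + 2" by linarith
  then have "(\<kappa> / 3) * G \<le> \<kappa> * real (g div 3) + 2 * \<kappa> / 3"
    using assms C1(1) mult_left_mono[of G "3 * real (g div 3) + 2" "\<kappa> / 3"] by (simp add: algebra_simps)
  then have "- \<kappa> * real (g div 3) \<le> \<kappa> + (- (\<kappa> / 3) * G)" using C1(1) by linarith
  then have "exp (- \<kappa> * real (g div 3)) \<le> exp \<kappa> * exp (- (\<kappa> / 3) * G)"
    by (simp add: exp_add[symmetric])
  then show ?thesis unfolding mix_rate_def decay_def using C1(1) by (simp add: divide_right_mono)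
qed

lemma sum_decay_le:
  assumes "\<And>j. j \<in> {2..L} \<Longrightarrow> f j \<le> cL * decay G"
  shows "(\<Sum>j=2..L. f j) \<le> real L * (cL * decay G)"
proof -
  have "(\<Sum>j=2..L. f j) \<le> (\<Sum>j=2..L. cL * decay G)" using assms by (rule sum_mono)
  also have "\<dots> = real (L - 1) * (cL * decay G)" by simp
  also have "\<dots> \<le> real L * (cL * decay G)"
    using cL_nonneg decay_nonneg by (intro mult_right_mono) auto
  finally show ?thesis .
qed

lemma between_factors_error:
  assumes adm: "n\<^sub>0 \<le> kmin N" and k: "kmin N \<le> k" "kmin N \<le> k'" "k' \<le> N"
  shows "(\<Sum>j=2..L. cL * mix_rate (q j k - q (j - 1) k')) \<le> real L * (cL * decay (gap_between N))"
  using factor_separation(2)[OF adm _ k] cL_nonneg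
  by (intro sum_decay_le mult_left_mono mix_rate_le_decay) auto

text \<open>The \<open>s\<close>-th moment (\<open>s \<le> 2\<close>) of the product of all factors at one time \<open>k\<close> is, up to
  \<open>err_one N\<close>, the product of the \<open>s\<close>-th moments: the factors decouple.\<close>
definition err_one :: "nat \<Rightarrow> real" where "err_one N = B ^ (2 * L) * (real L * (cL * decay (gap_between N)))"

lemma err_one_nonneg: "err_one N \<ge> 0"
  unfolding err_one_def using B_ge1 cL_nonneg decay_nonneg by simp

lemma one_time_product_moment:
  assumes adm: "n\<^sub>0 \<le> kmin N" and k: "kmin N \<le> k" "k \<le> N" and s: "s \<le> 2"
  shows "\<bar>(\<integral>\<omega>. (\<Prod>j=1..L. X j (q j k) \<omega> ^ s) \<partial>M) - (\<Prod>j=1..L. \<integral>\<omega>. X j 0 \<omega> ^ s \<partial>M)\<bar> \<le> err_one N"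
proof -
  have "\<bar>(\<integral>\<omega>. (\<Prod>j=1..L. X j (q j k) \<omega> ^ s) \<partial>M) - (\<Prod>j=1..L. \<integral>\<omega>. X j 0 \<omega> ^ s \<partial>M)\<bar>
     \<le> B ^ (2 * L) * ((\<Sum>j=1..L. 0) + (\<Sum>j=2..L. cL * mix_rate (q j k - q (j - 1) k)))"
  proof (rule separated_product_integral[where lo="\<lambda>j. q j k" and hi="\<lambda>j. q j k" and s="\<lambda>j. s"])
    show "value_product X L (\<lambda>t. q j k \<le> t \<and> t \<le> q j k) (\<lambda>\<omega>. X j (q j k) \<omega> ^ s) s"
      if "j \<in> {1..L}" for j
      using that by (intro value_product_power) auto
    show "q (j - 1) k + (q j k - q (j - 1) k) \<le> q j k" if "j \<in> {2..L}" for j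
      using factor_separation(1)[OF adm that k(1) k(1) k(2)] by simp
    show "\<bar>(\<integral>\<omega>. X j (q j k) \<omega> ^ s \<partial>M) - (\<integral>\<omega>. X j 0 \<omega> ^ s \<partial>M)\<bar> \<le> 0" if "j \<in> {1..L}" for j
      using moment_shift[OF that] by simp
    show "\<bar>\<integral>\<omega>. X j 0 \<omega> ^ s \<partial>M\<bar> \<le> B ^ 2" if "j \<in> {1..L}" for j
      using value_product_integral_bound[OF value_product_power[where P="\<lambda>_. True" and t=0, OF that TrueI]]
        power_increasing[OF s B_ge1] by (meson order_trans)
  qed (use s in auto)
  also have "\<dots> \<le> err_one N"
    unfolding err_one_def using between_factors_error[OF adm k(1) k(1) k(2)] B_ge1
    by (simp add: mult_left_mono)
  finally show ?thesis .
qed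

lemma factor_cross_moment:
  assumes adm: "n\<^sub>0 \<le> kmin N" and j: "j \<in> {2..L}" and k: "kmin N \<le> k" "k \<le> k'"
  shows "\<bar>(\<integral>\<omega>. X j (q j k) \<omega> * X j (q j k') \<omega> \<partial>M) - (a j)\<^sup>2\<bar> \<le> cL * decay (gap_within N (k' - k))"
proof -
  have j1: "j \<in> {1..L}" using j by simp
  have le: "q j k \<le> q j k'" using q_mono[OF j1 _ k(2)] adm k(1) by simp
  have "\<bar>(\<integral>\<omega>. X j (q j k) \<omega> * X j (q j k') \<omega> \<partial>M)
      - (\<integral>\<omega>. X j (q j k) \<omega> \<partial>M) * (\<integral>\<omega>. X j (q j k') \<omega> \<partial>M)\<bar> \<le> cL * mix_rate (q j k' - q j k)"
    by (rule value_product_decorrelation_uniform[where T="q j k"])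
      (use j1 le l_pos in \<open>auto intro: value_product_single\<close>)
  also have "\<dots> \<le> cL * decay (gap_within N (k' - k))"
    using time_separation[OF adm j k] cL_nonneg by (intro mult_left_mono mix_rate_le_decay) auto
  finally show ?thesis using mean_shift[OF j1] by (simp add: power2_eq_square)
qed

text \<open>Two different times \<open>k \<le> k'\<close>: only the first factor keeps its correlation.\<close>
lemma two_time_product_moment:
  assumes adm: "n\<^sub>0 \<le> kmin N" and k: "kmin N \<le> k" "k \<le> k'" "k' \<le> N"
  shows "\<bar>(\<integral>\<omega>. (\<Prod>j=1..L. X j (q j k) \<omega>) * (\<Prod>j=1..L. X j (q j k') \<omega>) \<partial>M)
         - (\<integral>\<omega>. X 1 (q 1 k) \<omega> * X 1 (q 1 k') \<omega> \<partial>M) * (\<Prod>j=2..L. (a j)\<^sup>2)\<bar>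
     \<le> B ^ (2 * L) * (real L * (cL * decay (gap_within N (k' - k)))) + err_one N"
proof -
  have L1: "1 \<in> {1..L}" using l_pos by simp
  have kn: "n\<^sub>0 \<le> k" using adm k by simp
  define w where "w j = (if j = 1 then (\<integral>\<omega>. X 1 (q 1 k) \<omega> * X 1 (q 1 k') \<omega> \<partial>M) else (a j)\<^sup>2)" for j :: nat
  define \<epsilon> where "\<epsilon> j = (if j = 1 then 0 else cL * decay (gap_within N (k' - k)))" for j :: nat
  have "\<bar>(\<integral>\<omega>. (\<Prod>j=1..L. X j (q j k) \<omega> * X j (q j k') \<omega>) \<partial>M) - (\<Prod>j=1..L. w j)\<bar>
     \<le> B ^ (2 * L) * ((\<Sum>j=1..L. \<epsilon> j) + (\<Sum>j=2..L. cL * mix_rate (q j k - q (j - 1) k')))"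
  proof (rule separated_product_integral[where lo="\<lambda>j. q j k" and hi="\<lambda>j. q j k'" and s="\<lambda>j. 2"])
    show "value_product X L (\<lambda>t. q j k \<le> t \<and> t \<le> q j k') (\<lambda>\<omega>. X j (q j k) \<omega> * X j (q j k') \<omega>) 2"
      if j: "j \<in> {1..L}" for j
    proof -
      have le: "q j k \<le> q j k'" using q_mono[OF j kn k(2)] .
      have "value_product X L (\<lambda>t. q j k \<le> t \<and> t \<le> q j k') (X j (q j k')) 1"
        by (rule value_product_single) (use j le in auto)
      moreover have "value_product X L (\<lambda>t. q j k \<le> t \<and> t \<le> q j k') (X j (q j k)) 1"
        by (rule value_product_single) (use j le in auto)
      ultimately show ?thesis using value_product_mult by (fastforce simp: numeral_2_eq_2)
    qed
    show "q (j - 1) k' + (q j k - q (j - 1) k') \<le> q j k" if "j \<in> {2..L}" for j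
      using factor_separation(1)[OF adm that k(1) _ k(3)] k by simp
    show "q j k \<le> q j k'" if "j \<in> {1..L}" for j using q_mono[OF that kn k(2)] .
    show "\<bar>(\<integral>\<omega>. X j (q j k) \<omega> * X j (q j k') \<omega> \<partial>M) - w j\<bar> \<le> \<epsilon> j" if j: "j \<in> {1..L}" for j
      using factor_cross_moment[OF adm _ k(1,2), of j] j unfolding w_def \<epsilon>_def by auto
    show "\<bar>w j\<bar> \<le> B ^ 2" if j: "j \<in> {1..L}" for j
    proof (cases "j = 1")
      case True
      have "value_product X L (\<lambda>_. True) (\<lambda>\<omega>. X 1 (q 1 k) \<omega> * X 1 (q 1 k') \<omega>) (1 + 1)"
        by (intro value_product_mult value_product_single L1) auto
      from value_product_integral_bound[OF this] show ?thesis
        using True unfolding w_def by (simp add: power2_eq_square)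
    next
      case False
      then show ?thesis using power_mono[OF a_bound[OF j] abs_ge_zero, of 2] unfolding w_def by simp
    qed
  qed auto
  also have "\<dots> \<le> B ^ (2 * L) * (real L * (cL * decay (gap_within N (k' - k)))) + err_one N"
  proof -
    have "(\<Sum>j=1..L. \<epsilon> j) = (\<Sum>j=2..L. cL * decay (gap_within N (k' - k)))"
      using sum.atLeast_Suc_atMost[OF l_pos, of \<epsilon>] unfolding \<epsilon>_def by (simp add: numeral_2_eq_2)
    also have "\<dots> \<le> real L * (cL * decay (gap_within N (k' - k)))" by (rule sum_decay_le) simp
    finally have "(\<Sum>j=1..L. \<epsilon> j) \<le> real L * (cL * decay (gap_within N (k' - k)))" .
    moreover have "(\<Sum>j=2..L. cL * mix_rate (q j k - q (j - 1) k')) \<le> real L * (cL * decay (gap_between N))"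
      using between_factors_error[OF adm k(1) _ k(3)] k by simp
    ultimately have "B ^ (2 * L) * ((\<Sum>j=1..L. \<epsilon> j) + (\<Sum>j=2..L. cL * mix_rate (q j k - q (j - 1) k')))
        \<le> B ^ (2 * L) * (real L * (cL * decay (gap_within N (k' - k))) + real L * (cL * decay (gap_between N)))"
      using B_ge1 by (intro mult_left_mono add_mono) auto
    then show ?thesis unfolding err_one_def by (simp add: distrib_left)
  qed
  finally show ?thesis
    using prod_split_first[OF l_pos, of w] unfolding w_def by (simp add: prod.distrib)
qed

subsection \<open>The autocovariance of the first factor\<close>

text \<open>\<open>cov1 d\<close>: the covariance of \<open>X\<^sub>1\<close> at lag \<open>r d\<close>, the lag between \<open>X\<^sub>1(q\<^sub>1 k)\<close> and
  \<open>X\<^sub>1(q\<^sub>1 (k + d))\<close>.\<close>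
definition cov1 :: "nat \<Rightarrow> real" where
  "cov1 d = (\<integral>\<omega>. (X 1 (r * d) \<omega> - a 1) * (X 1 0 \<omega> - a 1) \<partial>M)"

lemma one_in_range: "1 \<in> {1..L}" using l_pos by simp

lemma covariance_X1:
  "(\<integral>\<omega>. (X 1 t \<omega> - a 1) * (X 1 t' \<omega> - a 1) \<partial>M) = (\<integral>\<omega>. X 1 t \<omega> * X 1 t' \<omega> \<partial>M) - (a 1)\<^sup>2"
proof -
  have int: "integrable M (X 1 t)" "integrable M (X 1 t')"
    using integrable_AE_bounded[OF prob X_meas X_bound] one_in_range by auto
  have "value_product X L (\<lambda>_. True) (\<lambda>\<omega>. X 1 t \<omega> * X 1 t' \<omega>) (1 + 1)"
    by (intro value_product_mult value_product_single one_in_range) auto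
  then have "integrable M (\<lambda>\<omega>. X 1 t \<omega> * X 1 t' \<omega>)"
    using value_product_bound integrable_AE_bounded[OF prob] by blast
  moreover have "(\<lambda>\<omega>. (X 1 t \<omega> - a 1) * (X 1 t' \<omega> - a 1))
      = (\<lambda>\<omega>. X 1 t \<omega> * X 1 t' \<omega> - a 1 * X 1 t' \<omega> - a 1 * X 1 t \<omega> + a 1 * a 1)"
    by (rule ext) (simp add: algebra_simps)
  ultimately show ?thesis
    using int mean_shift[OF one_in_range] by (simp add: P.prob_space power2_eq_square)
qed

lemma cov1_0: "cov1 0 = (\<integral>\<omega>. X 1 0 \<omega> ^ 2 \<partial>M) - (a 1)\<^sup>2"
  unfolding cov1_def covariance_X1 by (simp add: power2_eq_square)

text \<open>The autocovariance decays geometrically, by decorrelation at gap \<open>r d \<ge> d\<close>.\<close>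
lemma cov1_geometric: "\<bar>cov1 d\<bar> \<le> (cL * (exp \<kappa> / \<kappa>)) * exp (- \<kappa> / 3) ^ d"
proof -
  have "\<bar>cov1 d\<bar>
      = \<bar>(\<integral>\<omega>. X 1 0 \<omega> * X 1 (r * d) \<omega> \<partial>M) - (\<integral>\<omega>. X 1 0 \<omega> \<partial>M) * (\<integral>\<omega>. X 1 (r * d) \<omega> \<partial>M)\<bar>"
    unfolding cov1_def covariance_X1 mean_shift[OF one_in_range] by (simp add: mult.commute power2_eq_square)
  also have "\<dots> \<le> cL * mix_rate (r * d)"
    by (rule value_product_decorrelation_uniform[where T=0])
      (use one_in_range l_pos in \<open>auto intro: value_product_single\<close>)
  also have "\<dots> \<le> cL * decay (real d)"
  proof (intro mult_left_mono mix_rate_le_decay cL_nonneg)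
    show "real d \<le> real (r * d)" using C2(1) by (simp only: of_nat_le_iff) simp
  qed
  also have "\<dots> = (cL * (exp \<kappa> / \<kappa>)) * exp (- \<kappa> / 3) ^ d"
    unfolding decay_def by (simp add: exp_of_nat_mult[symmetric] mult.commute mult.assoc)
  finally show ?thesis .
qed

lemma X1_cross_moment:
  assumes "k \<le> k'"
  shows "(\<integral>\<omega>. X 1 (q 1 k) \<omega> * X 1 (q 1 k') \<omega> \<partial>M) = cov1 (k' - k) + (a 1)\<^sup>2"
proof -
  have qk: "q 1 k' = q 1 k + r * (k' - k)"
    using C2(2) assms by (simp add: algebra_simps diff_mult_distrib2)
  have "(\<integral>\<omega>. (X 1 (q 1 k + r * (k' - k)) \<omega> - a 1) * (X 1 (q 1 k) \<omega> - a 1) \<partial>M) = cov1 (k' - k)"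
    unfolding cov1_def by (rule lag_covariance_shift[OF one_in_range])
  then show ?thesis unfolding qk[symmetric] covariance_X1 by (simp add: mult.commute)
qed

subsection \<open>Pair covariances of \<open>R(k)\<close>\<close>

definition prod_at :: "nat \<Rightarrow> 'a \<Rightarrow> real" where "prod_at k \<omega> = (\<Prod>j=1..L. X j (q j k) \<omega>)"
definition mean_prod :: real where "mean_prod = (\<Prod>j=1..L. a j)"
definition tail_sq :: real where "tail_sq = (\<Prod>j=2..L. (a j)\<^sup>2)"
definition diag_corr :: real where
  "diag_corr = (\<integral>\<omega>. X 1 0 \<omega> ^ 2 \<partial>M) * ((\<Prod>j=2..L. \<integral>\<omega>. X j 0 \<omega> ^ 2 \<partial>M) - tail_sq)"

text \<open>The limit of the covariance of \<open>R(k)\<close> and \<open>R(k')\<close> in the admissible range.\<close>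
definition limit_cov :: "nat \<Rightarrow> nat \<Rightarrow> real" where
  "limit_cov k k' = tail_sq * cov1 ((k - k') + (k' - k)) + (if k = k' then diag_corr else 0)"

lemma prod_at_value_product: "value_product X L (\<lambda>_. True) (prod_at k) L"
proof -
  have "value_product X L (\<lambda>_. True) (\<lambda>\<omega>. \<Prod>j=1..L. X j (q j k) \<omega>) (\<Sum>j=1..L. 1)"
    by (rule value_product_prod) (rule value_product_single, auto)
  then show ?thesis unfolding prod_at_def by simp
qed

lemma prod_at_integrable:
  "integrable M (prod_at k)" "integrable M (\<lambda>\<omega>. prod_at k \<omega> * prod_at k' \<omega>)"
  using value_product_bound[OF prod_at_value_product]
    value_product_bound[OF value_product_mult[OF prod_at_value_product prod_at_value_product]]
    integrable_AE_bounded[OF prob] by blast+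

lemma pair_covariance_expand:
  "(\<integral>\<omega>. (prod_at k \<omega> - mean_prod) * (prod_at k' \<omega> - mean_prod) \<partial>M)
    = (\<integral>\<omega>. prod_at k \<omega> * prod_at k' \<omega> \<partial>M) - mean_prod * (\<integral>\<omega>. prod_at k' \<omega> \<partial>M)
      - mean_prod * (\<integral>\<omega>. prod_at k \<omega> \<partial>M) + mean_prod\<^sup>2"
proof -
  have "(\<lambda>\<omega>. (prod_at k \<omega> - mean_prod) * (prod_at k' \<omega> - mean_prod))
      = (\<lambda>\<omega>. prod_at k \<omega> * prod_at k' \<omega> - mean_prod * prod_at k' \<omega> - mean_prod * prod_at k \<omega> + mean_prod * mean_prod)"
    by (rule ext) (simp add: algebra_simps)
  then show ?thesis
    using prod_at_integrable[of k] prod_at_integrable[of k'] prod_at_integrable(2)[of k k']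
    by (simp add: P.prob_space power2_eq_square)
qed

lemma mean_prod_bound: "\<bar>mean_prod\<bar> \<le> B ^ L"
proof -
  have "\<bar>mean_prod\<bar> = (\<Prod>j=1..L. \<bar>a j\<bar>)" unfolding mean_prod_def by (simp add: abs_prod)
  also have "\<dots> \<le> (\<Prod>j=1..L. B)"
    by (rule prod_mono) (simp add: a_bound)
  finally show ?thesis by simp
qed

lemma mean_prod_sq: "mean_prod\<^sup>2 = (a 1)\<^sup>2 * tail_sq"
proof -
  have "mean_prod = a 1 * (\<Prod>j=2..L. a j)" unfolding mean_prod_def by (rule prod_split_first[OF l_pos])
  then show ?thesis unfolding tail_sq_def by (simp add: power_mult_distrib prod_power_distrib)
qed

lemma mean_error:
  assumes adm: "n\<^sub>0 \<le> kmin N" and k: "kmin N \<le> k" "k \<le> N"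
  shows "\<bar>mean_prod * ((\<integral>\<omega>. prod_at k \<omega> \<partial>M) - mean_prod)\<bar> \<le> B ^ L * err_one N"
proof -
  have "\<bar>(\<integral>\<omega>. prod_at k \<omega> \<partial>M) - mean_prod\<bar> \<le> err_one N"
    using one_time_product_moment[OF adm k, of 1]
    unfolding prod_at_def mean_prod_def a_def mean0_def by simp
  then show ?thesis using mean_prod_bound err_one_nonneg by (simp add: abs_mult mult_mono)
qed

lemma pair_error_diag:
  assumes adm: "n\<^sub>0 \<le> kmin N" and k: "kmin N \<le> k" "k \<le> N"
  shows "\<bar>(\<integral>\<omega>. (prod_at k \<omega> - mean_prod) * (prod_at k \<omega> - mean_prod) \<partial>M) - limit_cov k k\<bar>
    \<le> (1 + 2 * B ^ L) * err_one N"
proof -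
  define e2 where "e2 = (\<integral>\<omega>. prod_at k \<omega> * prod_at k \<omega> \<partial>M) - (\<Prod>j=1..L. \<integral>\<omega>. X j 0 \<omega> ^ 2 \<partial>M)"
  define m where "m = mean_prod * ((\<integral>\<omega>. prod_at k \<omega> \<partial>M) - mean_prod)"
  have "\<bar>e2\<bar> \<le> err_one N"
    using one_time_product_moment[OF adm k, of 2]
    unfolding e2_def prod_at_def by (simp add: power2_eq_square prod.distrib)
  moreover have "\<bar>m\<bar> \<le> B ^ L * err_one N" unfolding m_def by (rule mean_error[OF adm k])
  moreover have "limit_cov k k = (\<Prod>j=1..L. \<integral>\<omega>. X j 0 \<omega> ^ 2 \<partial>M) - mean_prod\<^sup>2"
    unfolding limit_cov_def diag_corr_def mean_prod_sq prod_split_first[OF l_pos]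
    by (simp add: cov1_0 algebra_simps)
  then have "(\<integral>\<omega>. (prod_at k \<omega> - mean_prod) * (prod_at k \<omega> - mean_prod) \<partial>M) - limit_cov k k = e2 - 2 * m"
    unfolding pair_covariance_expand e2_def m_def by (simp add: algebra_simps power2_eq_square)
  ultimately show ?thesis by (simp add: abs_le_iff algebra_simps)
qed

lemma pair_error_offdiag:
  assumes adm: "n\<^sub>0 \<le> kmin N" and k: "kmin N \<le> k" "k < k'" "k' \<le> N"
  shows "\<bar>(\<integral>\<omega>. (prod_at k \<omega> - mean_prod) * (prod_at k' \<omega> - mean_prod) \<partial>M) - limit_cov k k'\<bar>
    \<le> (1 + 2 * B ^ L) * err_one N + B ^ (2 * L) * (real L * (cL * decay (gap_within N 1)))"
proof -
  define e3 where "e3 = (\<integral>\<omega>. prod_at k \<omega> * prod_at k' \<omega> \<partial>M) - (cov1 (k' - k) + (a 1)\<^sup>2) * tail_sq"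
  define m where "m = mean_prod * ((\<integral>\<omega>. prod_at k \<omega> \<partial>M) - mean_prod)"
  define m' where "m' = mean_prod * ((\<integral>\<omega>. prod_at k' \<omega> \<partial>M) - mean_prod)"
  define Y where "Y = B ^ (2 * L) * (real L * (cL * decay (gap_within N 1)))"
  have "decay (gap_within N (k' - k)) \<le> decay (gap_within N 1)"
    unfolding gap_within_def using k(2) by (intro decay_antimono mult_right_mono) auto
  then have "B ^ (2 * L) * (real L * (cL * decay (gap_within N (k' - k)))) \<le> Y"
    unfolding Y_def using B_ge1 cL_nonneg by (intro mult_left_mono) auto
  then have "\<bar>e3\<bar> \<le> Y + err_one N"
    using two_time_product_moment[OF adm k(1) _ k(3)] X1_cross_moment[of k k'] k(2)
    unfolding e3_def prod_at_def tail_sq_def by simp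
  moreover have "\<bar>m\<bar> \<le> B ^ L * err_one N" unfolding m_def using k by (intro mean_error[OF adm]) auto
  moreover have "\<bar>m'\<bar> \<le> B ^ L * err_one N" unfolding m'_def using k by (intro mean_error[OF adm]) auto
  moreover have "(\<integral>\<omega>. (prod_at k \<omega> - mean_prod) * (prod_at k' \<omega> - mean_prod) \<partial>M) - limit_cov k k'
      = e3 - m' - m"
    unfolding pair_covariance_expand e3_def m_def m'_def limit_cov_def using k(2) mean_prod_sq
    by (simp add: algebra_simps power2_eq_square)
  ultimately show ?thesis unfolding Y_def[symmetric] by (simp add: abs_le_iff algebra_simps)
qed

definition err_pair :: "nat \<Rightarrow> real" where
  "err_pair N = (1 + 2 * B ^ L) * err_one N + B ^ (2 * L) * (real L * (cL * decay (gap_within N 1)))"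

lemma pair_error:
  assumes adm: "n\<^sub>0 \<le> kmin N" and k: "kmin N \<le> k" "k \<le> N" and k': "kmin N \<le> k'" "k' \<le> N"
  shows "\<bar>(\<integral>\<omega>. (prod_at k \<omega> - mean_prod) * (prod_at k' \<omega> - mean_prod) \<partial>M) - limit_cov k k'\<bar> \<le> err_pair N"
proof -
  have extra: "0 \<le> B ^ (2 * L) * (real L * (cL * decay (gap_within N 1)))"
    using B_ge1 cL_nonneg decay_nonneg by simp
  consider "k = k'" | "k < k'" | "k' < k" by linarith
  then show ?thesis
  proof cases
    case 1 then show ?thesis using pair_error_diag[OF adm k] extra unfolding err_pair_def by simp
  next
    case 2 then show ?thesis using pair_error_offdiag[OF adm k(1) _ k'(2)] unfolding err_pair_def by simp
  next
    case 3
    moreover have "limit_cov k k' = limit_cov k' k" unfolding limit_cov_def by (simp add: add.commute)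
    ultimately show ?thesis using pair_error_offdiag[OF adm k'(1) _ k(2)] unfolding err_pair_def
      by (simp add: mult.commute)
  qed
qed

lemma second_moment_expand:
  "(\<integral>\<omega>. (\<Sum>k\<in>S. prod_at k \<omega> - mean_prod)\<^sup>2 \<partial>M)
    = (\<Sum>k\<in>S. \<Sum>k'\<in>S. \<integral>\<omega>. (prod_at k \<omega> - mean_prod) * (prod_at k' \<omega> - mean_prod) \<partial>M)"
proof -
  have int: "integrable M (\<lambda>\<omega>. (prod_at k \<omega> - mean_prod) * (prod_at k' \<omega> - mean_prod))" for k k'
  proof -
    have "(\<lambda>\<omega>. (prod_at k \<omega> - mean_prod) * (prod_at k' \<omega> - mean_prod))
      = (\<lambda>\<omega>. prod_at k \<omega> * prod_at k' \<omega> - mean_prod * prod_at k' \<omega> - mean_prod * prod_at k \<omega> + mean_prod * mean_prod)"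
      by (rule ext) (simp add: algebra_simps)
    then show ?thesis using prod_at_integrable[of k] prod_at_integrable[of k'] prod_at_integrable(2)[of k k']
      by simp
  qed
  have "(\<lambda>\<omega>. (\<Sum>k\<in>S. prod_at k \<omega> - mean_prod)\<^sup>2)
      = (\<lambda>\<omega>. \<Sum>k\<in>S. \<Sum>k'\<in>S. (prod_at k \<omega> - mean_prod) * (prod_at k' \<omega> - mean_prod))"
    by (rule ext) (simp add: power2_eq_square sum_product)
  then show ?thesis using int by (simp add: integral_sum integrable_sum)
qed

lemma sigmasq_eq: "sigmasq M L X r = diag_corr + tail_sq * (cov1 0 + 2 * (\<Sum>n. cov1 (Suc n)))"
proof -
  have "(\<lambda>n. cov1 (Suc n))
      = (\<lambda>n. \<integral>\<omega>. (X 1 (r * Suc n) \<omega> - mean0 M X 1) * (X 1 0 \<omega> - mean0 M X 1) \<partial>M)"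
    by (simp add: cov1_def a_def)
  then have "sigma1sq M X r = cov1 0 + 2 * (\<Sum>n. cov1 (Suc n))"
    unfolding sigma1sq_def cov1_0 by (simp add: a_def)
  then show ?thesis unfolding sigmasq_def diag_corr_def tail_sq_def a_def by (simp add: algebra_simps)
qed

lemma tail_sq_bound: "\<bar>tail_sq\<bar> \<le> B ^ (2 * L)"
proof -
  have "\<bar>tail_sq\<bar> = (\<Prod>j=2..L. \<bar>a j\<bar> ^ 2)" unfolding tail_sq_def by (simp add: abs_prod power_abs)
  also have "\<dots> \<le> (\<Prod>j=2..L. B ^ 2)"
  proof (rule prod_mono)
    fix j assume "j \<in> {2..L}"
    then have "\<bar>a j\<bar> \<le> B" using a_bound by auto
    from power_mono[OF this abs_ge_zero, of 2] show "0 \<le> \<bar>a j\<bar> ^ 2 \<and> \<bar>a j\<bar> ^ 2 \<le> B ^ 2" by simp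
  qed
  also have "\<dots> = B ^ (2 * (L - 1))" by (simp add: power_mult)
  also have "\<dots> \<le> B ^ (2 * L)" using B_ge1 by (intro power_increasing) auto
  finally show ?thesis .
qed

lemma limit_cov_block_sum:
  assumes "m \<le> n"
  shows "\<bar>(\<Sum>k=m+1..n. \<Sum>k'=m+1..n. limit_cov k k') - real (n - m) * sigmasq M L X r\<bar>
     \<le> B ^ (2 * L) * (2 * (cL * (exp \<kappa> / \<kappa>)) / (1 - exp (- \<kappa> / 3)) ^ 2)"
proof -
  have n: "n = m + (n - m)" using assms by simp
  have "(\<Sum>k=m+1..n. \<Sum>k'=m+1..n. (if k = k' then diag_corr else 0)) = real (n - m) * diag_corr"
    by (simp add: sum.delta)
  then have eq: "(\<Sum>k=m+1..n. \<Sum>k'=m+1..n. limit_cov k k') - real (n - m) * sigmasq M L X r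
      = tail_sq * (toeplitz_sum cov1 m (n - m) - real (n - m) * (cov1 0 + 2 * (\<Sum>n. cov1 (Suc n))))"
    unfolding limit_cov_def sigmasq_eq toeplitz_sum_def
    by (subst (1 2) n) (simp add: sum.distrib sum_distrib_left algebra_simps)
  have "\<bar>toeplitz_sum cov1 m (n - m) - real (n - m) * (cov1 0 + 2 * (\<Sum>n. cov1 (Suc n)))\<bar>
      \<le> 2 * (cL * (exp \<kappa> / \<kappa>)) / (1 - exp (- \<kappa> / 3)) ^ 2"
    by (rule toeplitz_sum_approx[OF cov1_geometric]) (use C1(1) in auto)
  from mult_mono[OF tail_sq_bound this] show ?thesis
    unfolding eq abs_mult using B_ge1 by simp
qed

text \<open>Both gaps grow at least like \<open>c\<^sub>\<gamma> N\<^sup>\<gamma>\<^sup>(\<^sup>1\<^sup>-\<^sup>\<gamma>\<^sup>)\<close>.\<close>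
definition c\<^sub>\<gamma> :: real where "c\<^sub>\<gamma> = min (2 powr \<gamma> - 1) (1 / 2 powr \<gamma>)"

lemma c\<^sub>\<gamma>_pos: "c\<^sub>\<gamma> > 0" unfolding c\<^sub>\<gamma>_def using gamma by (simp add: powr_gt_zero)

lemma gaps_lower_bound:
  assumes adm: "n\<^sub>0 \<le> kmin N"
  shows "c\<^sub>\<gamma> * real N powr (\<gamma> * (1 - \<gamma>)) \<le> gap_between N"
    "c\<^sub>\<gamma> * real N powr (\<gamma> * (1 - \<gamma>)) \<le> gap_within N 1"
proof -
  have F: "1 \<le> N" "kmin N \<le> N" "real N powr (1 - \<gamma>) \<le> 2 * real (kmin N)"
    using kmin_facts[OF adm] by auto
  have N2: "2 \<le> real N" using F(2) adm n0 by simp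
  have "real N powr (\<gamma> * (1 - \<gamma>)) \<le> real N powr 1"
    using F(1) gamma by (intro powr_mono) (auto simp: mult_le_one)
  then have "c\<^sub>\<gamma> * real N powr (\<gamma> * (1 - \<gamma>)) \<le> c\<^sub>\<gamma> * real N" using F(1) c\<^sub>\<gamma>_pos by simp
  also have "\<dots> \<le> (real N powr \<gamma> - 1) * real N"
  proof -
    have "2 powr \<gamma> \<le> real N powr \<gamma>" using N2 gamma by (intro powr_mono2) auto
    then have "c\<^sub>\<gamma> \<le> real N powr \<gamma> - 1" unfolding c\<^sub>\<gamma>_def by linarith
    then show ?thesis by (intro mult_right_mono) auto
  qed
  finally show "c\<^sub>\<gamma> * real N powr (\<gamma> * (1 - \<gamma>)) \<le> gap_between N"
    unfolding gap_between_def by (simp add: mult.commute)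
  have "c\<^sub>\<gamma> * real N powr (\<gamma> * (1 - \<gamma>)) \<le> real N powr (\<gamma> * (1 - \<gamma>)) / 2 powr \<gamma>"
    using mult_right_mono[of c\<^sub>\<gamma> "1 / 2 powr \<gamma>" "real N powr (\<gamma> * (1 - \<gamma>))"] unfolding c\<^sub>\<gamma>_def by simp
  also have "\<dots> = (real N powr (1 - \<gamma>) / 2) powr \<gamma>"
    by (simp add: powr_divide powr_powr mult.commute)
  also have "\<dots> \<le> real (kmin N) powr \<gamma>" using F(3) gamma by (intro powr_mono2) auto
  finally show "c\<^sub>\<gamma> * real N powr (\<gamma> * (1 - \<gamma>)) \<le> gap_within N 1" unfolding gap_within_def by simp
qed

lemma err_pair_quadratic: "\<exists>C. \<forall>N. n\<^sub>0 \<le> kmin N \<longrightarrow> real N ^ 2 * err_pair N \<le> C"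
proof -
  obtain C0 where C0: "\<And>x. x \<ge> 0 \<Longrightarrow> x ^ 2 * exp (- (\<kappa> / 3 * c\<^sub>\<gamma>) * x powr (\<gamma> * (1 - \<gamma>))) \<le> C0"
    using square_stretched_exp_bounded[of "\<kappa> / 3 * c\<^sub>\<gamma>" "\<gamma> * (1 - \<gamma>)"] c\<^sub>\<gamma>_pos gamma C1(1) by auto
  define c0 where "c0 = exp \<kappa> / \<kappa>"
  have c0: "c0 \<ge> 0" unfolding c0_def using C1(1) by simp
  have N_decay: "real N ^ 2 * decay G \<le> c0 * C0"
    if "c\<^sub>\<gamma> * real N powr (\<gamma> * (1 - \<gamma>)) \<le> G" for N G
  proof -
    have "real N ^ 2 * decay G \<le> real N ^ 2 * decay (c\<^sub>\<gamma> * real N powr (\<gamma> * (1 - \<gamma>)))"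
      using decay_antimono[OF that] by (simp add: mult_left_mono)
    also have "\<dots> = c0 * (real N ^ 2 * exp (- (\<kappa> / 3 * c\<^sub>\<gamma>) * real N powr (\<gamma> * (1 - \<gamma>))))"
      unfolding decay_def c0_def by (simp add: algebra_simps)
    also have "\<dots> \<le> c0 * C0" using C0[of "real N"] c0 by (intro mult_left_mono) auto
    finally show ?thesis .
  qed
  define Q where "Q = B ^ (2 * L) * (real L * cL)"
  have Q: "Q \<ge> 0" unfolding Q_def using B_ge1 cL_nonneg by simp
  have "real N ^ 2 * err_pair N \<le> (1 + 2 * B ^ L) * (Q * (c0 * C0)) + Q * (c0 * C0)"
    if adm: "n\<^sub>0 \<le> kmin N" for N
  proof -
    have "real N ^ 2 * err_pair N
        = (1 + 2 * B ^ L) * (Q * (real N ^ 2 * decay (gap_between N)))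
          + Q * (real N ^ 2 * decay (gap_within N 1))"
      unfolding err_pair_def err_one_def Q_def by (simp add: algebra_simps)
    also have "\<dots> \<le> (1 + 2 * B ^ L) * (Q * (c0 * C0)) + Q * (c0 * C0)"
      using N_decay[OF gaps_lower_bound(1)[OF adm]] N_decay[OF gaps_lower_bound(2)[OF adm]] Q B_ge1
      by (intro add_mono mult_left_mono) auto
    finally show ?thesis .
  qed
  then show ?thesis by blast
qed

lemma pair_errors_sum:
  assumes adm: "n\<^sub>0 \<le> kmin N" and S: "S \<subseteq> {kmin N..N}"
  shows "\<bar>\<Sum>k\<in>S. \<Sum>k'\<in>S. (\<integral>\<omega>. (prod_at k \<omega> - mean_prod) * (prod_at k' \<omega> - mean_prod) \<partial>M)
      - limit_cov k k'\<bar> \<le> real N ^ 2 * err_pair N"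
proof -
  have "\<bar>\<Sum>k\<in>S. \<Sum>k'\<in>S. (\<integral>\<omega>. (prod_at k \<omega> - mean_prod) * (prod_at k' \<omega> - mean_prod) \<partial>M)
      - limit_cov k k'\<bar> \<le> (\<Sum>k\<in>S. \<Sum>k'\<in>S. err_pair N)"
    by (rule order_trans[OF sum_abs], intro sum_mono order_trans[OF sum_abs])
      (use S in \<open>auto intro!: pair_error[OF adm]\<close>)
  also have "\<dots> = real (card S) ^ 2 * err_pair N" by (simp add: power2_eq_square)
  also have "\<dots> \<le> real N ^ 2 * err_pair N"
  proof (intro mult_right_mono power_mono)
    have "card S \<le> card {kmin N..N}" using S by (intro card_mono) auto
    then show "real (card S) \<le> real N" using adm n0 by simp
    show "0 \<le> err_pair N"
      unfolding err_pair_def using err_one_nonneg B_ge1 cL_nonneg decay_nonneg by simp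
  qed simp
  finally show ?thesis .
qed

theorem second_moment_bound:
  "\<exists>C>0. \<forall>N n m. N \<ge> n \<and> n > m \<and> m \<ge> nat \<lfloor>real N powr (1 - \<gamma>)\<rfloor>
              \<and> nat \<lfloor>real N powr (1 - \<gamma>)\<rfloor> \<ge> n\<^sub>0 \<longrightarrow>
           \<bar>(\<integral>\<omega>. (\<Sum>k=m+1..n. Rproc M L X q k \<omega>)\<^sup>2 \<partial>M) - real (n - m) * sigmasq M L X r\<bar> \<le> C"
proof -
  obtain CE where CE: "\<And>N. n\<^sub>0 \<le> kmin N \<Longrightarrow> real N ^ 2 * err_pair N \<le> CE"
    using err_pair_quadratic by blast
  define CL where "CL = B ^ (2 * L) * (2 * (cL * (exp \<kappa> / \<kappa>)) / (1 - exp (- \<kappa> / 3)) ^ 2)"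
  show ?thesis
  proof (intro exI[where x="max (CE + CL) 1"] conjI allI impI)
    fix N n m
    assume "N \<ge> n \<and> n > m \<and> m \<ge> nat \<lfloor>real N powr (1 - \<gamma>)\<rfloor> \<and> nat \<lfloor>real N powr (1 - \<gamma>)\<rfloor> \<ge> n\<^sub>0"
    then have adm: "n\<^sub>0 \<le> kmin N" and mK: "kmin N \<le> m" and nN: "n \<le> N" and mn: "m < n"
      unfolding kmin_def by auto
    define S where "S = {m+1..n}"
    define E where "E k k' = (\<integral>\<omega>. (prod_at k \<omega> - mean_prod) * (prod_at k' \<omega> - mean_prod) \<partial>M)
      - limit_cov k k'" for k k'
    have "Rproc M L X q k \<omega> = prod_at k \<omega> - mean_prod" for k \<omega>
      unfolding Rproc_def prod_at_def mean_prod_def a_def ..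
    then have "(\<integral>\<omega>. (\<Sum>k=m+1..n. Rproc M L X q k \<omega>)\<^sup>2 \<partial>M)
        = (\<Sum>k\<in>S. \<Sum>k'\<in>S. \<integral>\<omega>. (prod_at k \<omega> - mean_prod) * (prod_at k' \<omega> - mean_prod) \<partial>M)"
      unfolding S_def by (simp only: second_moment_expand)
    then have "(\<integral>\<omega>. (\<Sum>k=m+1..n. Rproc M L X q k \<omega>)\<^sup>2 \<partial>M) - real (n - m) * sigmasq M L X r
        = (\<Sum>k\<in>S. \<Sum>k'\<in>S. E k k')
          + ((\<Sum>k=m+1..n. \<Sum>k'=m+1..n. limit_cov k k') - real (n - m) * sigmasq M L X r)"
      unfolding E_def by (simp add: S_def sum_subtractf)
    moreover have "\<bar>\<Sum>k\<in>S. \<Sum>k'\<in>S. E k k'\<bar> \<le> CE"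
      using pair_errors_sum[OF adm, of S] CE[OF adm] mK nN unfolding S_def E_def by fastforce
    moreover have "\<bar>(\<Sum>k=m+1..n. \<Sum>k'=m+1..n. limit_cov k k') - real (n - m) * sigmasq M L X r\<bar> \<le> CL"
      unfolding CL_def using limit_cov_block_sum mn by simp
    ultimately show "\<bar>(\<integral>\<omega>. (\<Sum>k=m+1..n. Rproc M L X q k \<omega>)\<^sup>2 \<partial>M) - real (n - m) * sigmasq M L X r\<bar>
        \<le> max (CE + CL) 1"
      by (simp add: abs_le_iff) linarith
  qed simp
qed

end

theorem lemma3p5:
  fixes M :: "'a measure"
    and L :: nat
    and X :: "nat \<Rightarrow> nat \<Rightarrow> 'a \<Rightarrow> real"
    and q :: "nat \<Rightarrow> nat \<Rightarrow> nat"
    and F :: "ereal \<Rightarrow> ereal \<Rightarrow> 'a measure"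
    and D \<kappa> \<gamma> :: real
    and r p n\<^sub>0 :: nat
  assumes prob: "prob_space M"
    and l_pos: "L \<ge> 1"
    and X_meas: "\<And>j n. j \<in> {1..L} \<Longrightarrow> X j n \<in> borel_measurable M"
    and X_stat: "\<And>j. j \<in> {1..L} \<Longrightarrow> stationary_proc M (X j)"
    and X_bdd: "\<And>j n. j \<in> {1..L} \<Longrightarrow> AE \<omega> in M. \<bar>X j n \<omega>\<bar> \<le> D"
    and F_sub: "\<And>k l. subalgebra M (F k l)"
    and F_mono: "\<And>k l k' l'. k' \<le> k \<Longrightarrow> l \<le> l' \<Longrightarrow> sets (F k l) \<subseteq> sets (F k' l')"
    and C1: "\<kappa> > 0" "\<And>n. alpha_mix M F n + Max ((\<lambda>j. beta_approx M F (X j) n) ` {1..L})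
                              \<le> exp (- \<kappa> * real n) / \<kappa>"
    and C2: "r > 0" "\<And>n. q 1 n = r * n + p"
    and gamma: "0 < \<gamma>" "\<gamma> < 1" and n0: "n\<^sub>0 > 1"
    and C3: "\<And>j n. j \<in> {2..L} \<Longrightarrow> n \<ge> n\<^sub>0 \<Longrightarrow>
               real (q j (n + 1)) \<ge> real (q j n) + real n powr \<gamma>"
    and C4: "\<And>j n. j \<in> {1..<L} \<Longrightarrow> n \<ge> n\<^sub>0 \<Longrightarrow>
               real (q (j + 1) (nat \<lfloor>real n powr (1 - \<gamma>)\<rfloor>)) \<ge> real (q j n) * real n powr \<gamma>"
  shows "\<exists>C>0. \<forall>N n m. N \<ge> n \<and> n > m \<and> m \<ge> nat \<lfloor>real N powr (1 - \<gamma>)\<rfloor>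
              \<and> nat \<lfloor>real N powr (1 - \<gamma>)\<rfloor> \<ge> n\<^sub>0 \<longrightarrow>
           \<bar>(\<integral>\<omega>. (\<Sum>k=m+1..n. Rproc M L X q k \<omega>)\<^sup>2 \<partial>M) - real (n - m) * sigmasq M L X r\<bar> \<le> C"
proof -
  interpret nonconventional_setup M L X q F D \<kappa> \<gamma> r p n\<^sub>0
    by (rule nonconventional_setup.intro) (fact prob l_pos X_meas X_stat X_bdd F_sub F_mono C1 C2 gamma n0 C3 C4)+
  show ?thesis by (rule second_moment_bound)
qed

end
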